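(* Let $\mathcal{X}\subset\mathbb{R}^d$ be a compact metric space, $\mathcal{Y}\subset\mathbb{R}$, and let $\rho$ be a probability measure on $\mathcal{X}\times\mathcal{Y}$ with marginal $\rho_{\mathcal{X}}$. Let $f^\star(x)=\mathbb{E}(Y\mid X=x)$ be bounded, let $\mathcal{H}$ be a compact, uniformly bounded subset of $C(\mathcal{X})$ with $f^\star\in\mathcal{H}$, and set $M=\max\{\|f^\star\|_\infty,\sup_{f\in\mathcal{H}}\|f\|_\infty\}$. Assume: (i) there is $\epsilon>0$ with $\mathbb{E}|Y|^{1+\epsilon}<+\infty$; (ii) there exist positive constants $q,c$ with $\log\mathcal{N}(\mathcal{H},\eta)\le c\,\eta^{-q}$ for all $\eta>0$. Let $\mathbf{z}=\{(x_i,y_i)\}_{i=1}^n$ be i.i.d. draws from $\rho$, let $\sigma=n^{\Phi(\epsilon,q)}$ with \[ \Phi(\epsilon,q)=\begin{cases}\dfrac{1}{(1+\epsilon)(1+q)}, & 0<\epsilon\le1,\\[1ex] \dfrac{1+\epsilon}{q(1+\epsilon)^2+\epsilon(\epsilon+3)}, & \epsilon>1,\end{cases} \] and suppose $\sigma>\max\{2M,1\}$. Let $f_{\mathbf{z},\sigma}=\arg\min_{f\in\mathcal{H}}\frac1n\sum_{i=1}^n\ell_\sigma(y_i-f(x_i))$. Then for any $0<\delta<1$, with probability at least $1-\delta$, \[ \|f_{\mathbf{z},\sigma}-f^\star\|_{2,\rho}^2\lesssim\log(2/\delta)\,n^{-\epsilon\Phi(\epsilon,q)}. \]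
   Context: The Huber loss with scale parameter $\sigma>0$ is $\ell_\sigma(t)=t^2$ if $|t|\le\sigma$ and $\ell_\sigma(t)=2\sigma|t|-\sigma^2$ otherwise. $\|g\|_{2,\rho}$ is the $L^2(\rho_{\mathcal{X}})$ norm. For $\eta>0$, $\mathcal{N}(\mathcal{H},\eta)$ is the minimal $k$ such that there exist $f_1,\dots,f_k\in\mathcal{H}$ with $\mathcal{H}\subset\bigcup_{j=1}^k\{f\in C(\mathcal{X}):\|f-f_j\|_\infty<\eta\}$. The notation $a\lesssim b$ means $a\le Cb$ for a positive constant $C$ independent of $n$ and $\delta$. *)

theory Defs
  imports "HOL-Probability.Probability"
begin

definition huber :: "real \<Rightarrow> real \<Rightarrow> real" where
  "huber \<sigma> t = (if \<bar>t\<bar> \<le> \<sigma> then t\<^sup>2 else 2 * \<sigma> * \<bar>t\<bar> - \<sigma>\<^sup>2)"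

definition sup_norm_on :: "'a set \<Rightarrow> ('a \<Rightarrow> real) \<Rightarrow> real" where
  "sup_norm_on X f = (SUP x\<in>X. \<bar>f x\<bar>)"

definition subset_CX :: "'a::topological_space set \<Rightarrow> ('a \<Rightarrow> real) set \<Rightarrow> bool" where
  "subset_CX X H \<longleftrightarrow> (\<forall>f\<in>H. continuous_on X f)"

definition compact_in_CX :: "'a set \<Rightarrow> ('a \<Rightarrow> real) set \<Rightarrow> bool" where
  "compact_in_CX X H \<longleftrightarrow>
     (\<forall>s. (\<forall>k. s k \<in> H) \<longrightarrow>
        (\<exists>g\<in>H. \<exists>r::nat\<Rightarrow>nat. strict_mono r \<and>
            (\<lambda>k. sup_norm_on X (\<lambda>x. s (r k) x - g x)) \<longlonglongrightarrow> 0))"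

definition uniformly_bounded_on :: "'a set \<Rightarrow> ('a \<Rightarrow> real) set \<Rightarrow> bool" where
  "uniformly_bounded_on X H \<longleftrightarrow> (\<exists>B. \<forall>f\<in>H. \<forall>x\<in>X. \<bar>f x\<bar> \<le> B)"

definition covering_number :: "'a set \<Rightarrow> ('a \<Rightarrow> real) set \<Rightarrow> real \<Rightarrow> nat" where
  "covering_number X H \<eta> =
     (LEAST k. \<exists>F. finite F \<and> card F \<le> k \<and> F \<subseteq> H \<and>
        (\<forall>f\<in>H. \<exists>g\<in>F. sup_norm_on X (\<lambda>x. f x - g x) < \<eta>))"

text \<open>f is (a version of) the regression function E(Y | X = x) under rho,
  with rho concentrated on X \<times> R: for every Borel set A,
  E[Y 1_A(X)] = E[f(X) 1_A(X)].\<close>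
definition is_regression_function ::
  "('a::euclidean_space \<times> real) measure \<Rightarrow> 'a set \<Rightarrow> ('a \<Rightarrow> real) \<Rightarrow> bool" where
  "is_regression_function \<rho> X f \<longleftrightarrow>
     (\<forall>A \<in> sets borel.
        integrable \<rho> (\<lambda>z. indicator (A \<inter> X) (fst z) * f (fst z)) \<and>
        (LINT z|\<rho>. indicator A (fst z) * snd z) =
        (LINT z|\<rho>. indicator (A \<inter> X) (fst z) * f (fst z)))"

definition Phi :: "real \<Rightarrow> real \<Rightarrow> real" where
  "Phi \<epsilon> q = (if \<epsilon> \<le> 1 then 1 / ((1 + \<epsilon>) * (1 + q))
               else (1 + \<epsilon>) / (q * (1 + \<epsilon>)\<^sup>2 + \<epsilon> * (\<epsilon> + 3)))"

definition emp_risk :: "real \<Rightarrow> nat \<Rightarrow> (nat \<Rightarrow> 'a \<times> real) \<Rightarrow> ('a \<Rightarrow> real) \<Rightarrow> real" where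
  "emp_risk \<sigma> n z f = (1 / real n) * (\<Sum>i<n. huber \<sigma> (snd (z i) - f (fst (z i))))"

end

(* The excess Huber loss xi_f = l_sigma(Y - f(X)) - l_sigma(Y - f*(X)) of a hypothesis f has mean
   ||f - f*||^2 up to a bias of order sigma^(-eps): for the squared loss this is exact, because the
   residual Y - f*(X) is orthogonal to functions of X, and the Huber loss differs from the squared
   loss only where |Y| > sigma/2, which the (1 + eps)-th moment makes rare.  Its second moment is
   at most 4 tau^2 ||f - f*||^2 plus a truncation term, so Bernstein's inequality, applied to the
   centres of a finite eta-cover of H and combined by a union bound, gives a deviation that can be
   absorbed into ||g - f*||^2 for the centre g next to the empirical risk minimiser; the latter
   has nonpositive empirical excess loss.  The choices sigma = n^Phi, eta = sigma^(-(1+eps)) and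
   tau = sigma^(eps/(1+eps)) make every error term at most a constant times
   log(2/delta) * n^(-eps Phi). *)

theory Submission
  imports Defs
begin

section \<open>Huber loss and truncation estimates\<close>

lemma huber_eq_sq_minus_excess: "huber s t = t\<^sup>2 - (max (\<bar>t\<bar> - s) 0)\<^sup>2"
  by (auto simp: huber_def power2_eq_square algebra_simps max_def abs_mult_self_eq)

lemma huber_abs [simp]: "huber s \<bar>t\<bar> = huber s t"
  by (simp add: huber_def)

lemma huber_increment_bounds:
  fixes s x y :: real
  assumes "0 < s" "0 \<le> y" "y \<le> x"
  shows "0 \<le> huber s x - huber s y" and "huber s x - huber s y \<le> 2 * (x - y) * min x s"
proof -
  consider "x \<le> s" | "y \<le> s" "s < x" | "s < y" using assms by linarith
  then have "0 \<le> huber s x - huber s y \<and> huber s x - huber s y \<le> 2 * (x - y) * min x s"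
  proof cases
    case 1
    have "0 \<le> (x - y)\<^sup>2" "y * y \<le> x * x" using assms by (auto intro: mult_mono)
    then show ?thesis using 1 assms
      by (simp add: huber_def power2_eq_square algebra_simps)
  next
    case 2
    have "huber s x - huber s y = 2 * s * x - s * s - y * y"
      using 2 assms by (simp add: huber_def power2_eq_square)
    moreover have "0 \<le> (s - y) * (s - y)" by simp
    moreover have "y * y \<le> s * s" using 2 assms by (auto intro: mult_mono)
    moreover have "s * s \<le> s * x" using 2 assms by simp
    ultimately show ?thesis using 2 by (simp add: algebra_simps)
  next
    case 3
    then show ?thesis using assms
      by (simp add: huber_def algebra_simps)
  qed
  then show "0 \<le> huber s x - huber s y" "huber s x - huber s y \<le> 2 * (x - y) * min x s"
    by auto
qed

lemma huber_diff_le: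
  fixes s a b :: real
  assumes "0 < s"
  shows "\<bar>huber s a - huber s b\<bar> \<le> 2 * \<bar>a - b\<bar> * min (max \<bar>a\<bar> \<bar>b\<bar>) s"
proof -
  have *: "\<bar>huber s x - huber s y\<bar> \<le> 2 * \<bar>x - y\<bar> * min (max x y) s"
    if "0 \<le> y" "y \<le> x" for x y :: real
    using huber_increment_bounds[OF assms that] that by (simp add: max_def)
  have "\<bar>\<bar>a\<bar> - \<bar>b\<bar>\<bar> \<le> \<bar>a - b\<bar>" by (rule abs_triangle_ineq3)
  moreover have "\<bar>huber s \<bar>a\<bar> - huber s \<bar>b\<bar>\<bar> \<le> 2 * \<bar>\<bar>a\<bar> - \<bar>b\<bar>\<bar> * min (max \<bar>a\<bar> \<bar>b\<bar>) s"
    using *[of "\<bar>b\<bar>" "\<bar>a\<bar>"] *[of "\<bar>a\<bar>" "\<bar>b\<bar>"]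
    by (cases "\<bar>b\<bar> \<le> \<bar>a\<bar>") (auto simp: abs_minus_commute max.commute)
  moreover have "0 \<le> min (max \<bar>a\<bar> \<bar>b\<bar>) s" using assms by simp
  ultimately show ?thesis
    by (smt (verit, best) huber_abs mult_right_mono)
qed

lemma huber_diff_sq_diff_le:
  fixes s a b :: real
  shows "\<bar>(huber s a - huber s b) - (a\<^sup>2 - b\<^sup>2)\<bar> \<le> 2 * \<bar>a - b\<bar> * max (max \<bar>a\<bar> \<bar>b\<bar> - s) 0"
proof -
  define u where "u = max (\<bar>a\<bar> - s) 0"
  define w where "w = max (\<bar>b\<bar> - s) 0"
  have "\<bar>(huber s a - huber s b) - (a\<^sup>2 - b\<^sup>2)\<bar> = \<bar>w - u\<bar> * (w + u)"
  proof -
    have "w + u \<ge> 0" by (simp add: u_def w_def)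
    moreover have "w\<^sup>2 - u\<^sup>2 = (w - u) * (w + u)" by (simp add: power2_eq_square algebra_simps)
    ultimately have "\<bar>w\<^sup>2 - u\<^sup>2\<bar> = \<bar>w - u\<bar> * (w + u)" by (simp add: abs_mult)
    then show ?thesis by (simp add: huber_eq_sq_minus_excess u_def w_def)
  qed
  also have "\<dots> \<le> \<bar>a - b\<bar> * (2 * max (max \<bar>a\<bar> \<bar>b\<bar> - s) 0)"
  proof (rule mult_mono)
    show "\<bar>w - u\<bar> \<le> \<bar>a - b\<bar>"
      using abs_triangle_ineq3[of a b] by (simp add: u_def w_def max_def abs_if split: if_splits)
  qed (auto simp: u_def w_def max_def)
  finally show ?thesis by simp
qed

lemma truncation_excess_le_moment:
  fixes M s \<epsilon> y :: real
  assumes "0 \<le> M" "2 * M < s" "0 < \<epsilon>"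
  shows "max (\<bar>y\<bar> + M - s) 0 \<le> \<bar>y\<bar> powr (1 + \<epsilon>) * (s / 2) powr (- \<epsilon>)"
proof (cases "\<bar>y\<bar> \<le> s / 2")
  case True
  then show ?thesis using assms by simp
next
  case False
  have "0 < s / 2" using assms by linarith
  have "\<bar>y\<bar> + M - s \<le> \<bar>y\<bar> * ((s / 2) powr \<epsilon> * (s / 2) powr (- \<epsilon>))"
    using assms \<open>0 < s / 2\<close> by (simp add: powr_minus)
  also have "\<dots> \<le> \<bar>y\<bar> * (\<bar>y\<bar> powr \<epsilon> * (s / 2) powr (- \<epsilon>))"
    using False \<open>0 < s / 2\<close> assms by (intro mult_left_mono mult_right_mono powr_mono2) auto
  also have "\<dots> = \<bar>y\<bar> powr (1 + \<epsilon>) * (s / 2) powr (- \<epsilon>)"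
    using False \<open>0 < s / 2\<close> by (simp add: powr_add)
  finally show ?thesis by simp
qed

definition truncation_scale :: "real \<Rightarrow> real \<Rightarrow> real \<Rightarrow> real" where
  "truncation_scale \<epsilon> \<sigma> \<tau> = (if \<epsilon> \<le> 1 then \<sigma> powr (1 - \<epsilon>) else \<tau> powr (1 - \<epsilon>))"

lemma truncation_scale_nonneg: "0 \<le> truncation_scale \<epsilon> \<sigma> \<tau>"
  by (simp add: truncation_scale_def)

text \<open>Split \<open>W\<^sup>2 = W powr (1 + \<epsilon>) * W powr (1 - \<epsilon>)\<close>; for \<open>\<epsilon> > 1\<close> the second factor decreases
  in \<open>W\<close>, so it is controlled only above the threshold \<open>\<tau>\<close>.\<close>

lemma sq_le_truncation_moment:
  fixes W Y \<sigma> \<tau> \<epsilon> :: real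
  assumes "0 \<le> W" "W \<le> \<sigma>" "W \<le> Y" "0 < \<tau>" "0 < \<epsilon>"
  shows "W\<^sup>2 \<le> \<tau>\<^sup>2 + Y powr (1 + \<epsilon>) * truncation_scale \<epsilon> \<sigma> \<tau>"
proof (cases "W = 0 \<or> W \<le> \<tau> \<and> 1 < \<epsilon>")
  case True
  then have "W\<^sup>2 \<le> \<tau>\<^sup>2" using assms by (intro power_mono) auto
  moreover have "0 \<le> Y powr (1 + \<epsilon>) * truncation_scale \<epsilon> \<sigma> \<tau>"
    by (simp add: truncation_scale_nonneg)
  ultimately show ?thesis by linarith
next
  case False
  then have "0 < W" using assms by auto
  then have "W\<^sup>2 = W powr (1 + \<epsilon>) * W powr (1 - \<epsilon>)"
    by (simp add: power2_eq_square flip: powr_add)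
  also have "\<dots> \<le> Y powr (1 + \<epsilon>) * truncation_scale \<epsilon> \<sigma> \<tau>"
  proof (rule mult_mono)
    show "W powr (1 + \<epsilon>) \<le> Y powr (1 + \<epsilon>)" using assms by (intro powr_mono2) auto
    show "W powr (1 - \<epsilon>) \<le> truncation_scale \<epsilon> \<sigma> \<tau>"
      using False assms \<open>0 < W\<close> by (auto simp: truncation_scale_def intro: powr_mono2 powr_mono2')
  qed auto
  finally show ?thesis by (simp add: add_increasing)
qed

lemma sqrt_variance_absorb:
  fixes D u v V \<tau> :: real
  assumes "0 \<le> D" "0 \<le> u" "0 \<le> V" "v \<le> 4 * \<tau>\<^sup>2 * D + V"
  shows "2 * sqrt (v * u) \<le> D / 2 + 8 * \<tau>\<^sup>2 * u + 2 * sqrt (V * u)"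
proof -
  have "sqrt (v * u) \<le> sqrt (4 * \<tau>\<^sup>2 * D * u + V * u)"
    using mult_right_mono[OF assms(4) assms(2)] by (simp add: distrib_right)
  also have "\<dots> \<le> sqrt (4 * \<tau>\<^sup>2 * D * u) + sqrt (V * u)"
    using assms by (intro sqrt_add_le_add_sqrt) auto
  also have "sqrt (4 * \<tau>\<^sup>2 * D * u) = 2 * \<bar>\<tau>\<bar> * (sqrt D * sqrt u)"
    by (simp add: real_sqrt_mult)
  also have "4 * \<bar>\<tau>\<bar> * (sqrt D * sqrt u) \<le> D / 2 + 8 * \<tau>\<^sup>2 * u"
  proof -
    define a where "a = \<bar>\<tau>\<bar> * sqrt u"
    have "a\<^sup>2 = \<tau>\<^sup>2 * u" "(sqrt D)\<^sup>2 = D" using assms by (simp_all add: a_def power_mult_distrib)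
    moreover have "0 \<le> (sqrt D - 4 * a)\<^sup>2" by simp
    ultimately have "4 * a * sqrt D \<le> D / 2 + 8 * \<tau>\<^sup>2 * u"
      by (simp add: power2_diff power_mult_distrib mult_ac)
    then show ?thesis by (simp add: a_def mult_ac)
  qed
  ultimately show ?thesis by linarith
qed

section \<open>Bernstein's inequality on finite product spaces\<close>

lemma exp_le_one_plus_x_plus_sq:
  fixes x :: real
  assumes "x \<le> 1"
  shows "exp x \<le> 1 + x + x\<^sup>2"
proof (cases "x \<ge> 0")
  case True
  then show ?thesis using exp_bound assms by blast
next
  case False
  obtain t where "exp x = 1 + x + x\<^sup>2 / 2 + exp t / 6 * x ^ 3"
    using Maclaurin_exp_le[of x 3] by (auto simp: numeral_3_eq_3 power2_eq_square)
  moreover have "exp t / 6 * x ^ 3 \<le> 0"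
    using False by (simp add: mult_nonneg_nonpos odd_power_less_zero less_imp_le)
  moreover have "0 \<le> x\<^sup>2" by simp
  ultimately show ?thesis by linarith
qed

lemma (in prob_space) bernstein_mgf_bound:
  fixes h :: "'a \<Rightarrow> real" and b v l :: real
  assumes [measurable]: "h \<in> borel_measurable M"
    and bounded: "\<And>z. z \<in> space M \<Longrightarrow> \<bar>h z\<bar> \<le> b"
    and centered: "expectation h = 0" and variance: "expectation (\<lambda>z. (h z)\<^sup>2) \<le> v"
    and l: "0 < l" "l * b \<le> 1"
  shows "(\<integral>\<^sup>+z. ennreal (exp (l * h z)) \<partial>M) \<le> ennreal (exp (l\<^sup>2 * v))"
proof -
  have int_h: "integrable M h"
    using bounded by (intro integrable_const_bound[where B = b]) auto
  have "(h z)\<^sup>2 \<le> b\<^sup>2" if "z \<in> space M" for z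
    using power_mono[OF bounded[OF that] abs_ge_zero, of 2] by simp
  then have int_sq: "integrable M (\<lambda>z. (h z)\<^sup>2)"
    by (intro integrable_const_bound[where B = "b\<^sup>2"]) auto
  have exp_le: "exp (l * h z) \<le> 1 + l * h z + l\<^sup>2 * (h z)\<^sup>2" if "z \<in> space M" for z
  proof -
    have "l * h z \<le> l * b" using bounded[OF that] l by (intro mult_left_mono) auto
    then have "l * h z \<le> 1" using l by linarith
    from exp_le_one_plus_x_plus_sq[OF this] show ?thesis by (simp add: power_mult_distrib)
  qed
  have "exp (l * h z) \<le> exp (l * b)" if "z \<in> space M" for z
    using bounded[OF that] l by (auto intro!: mult_left_mono simp: abs_le_iff)
  then have int_exp: "integrable M (\<lambda>z. exp (l * h z))"
    by (intro integrable_const_bound[where B = "exp (l * b)"]) auto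
  have "(\<integral>\<^sup>+z. ennreal (exp (l * h z)) \<partial>M) = ennreal (expectation (\<lambda>z. exp (l * h z)))"
    by (rule nn_integral_eq_integral[OF int_exp]) auto
  also have "expectation (\<lambda>z. exp (l * h z)) \<le> expectation (\<lambda>z. 1 + l * h z + l\<^sup>2 * (h z)\<^sup>2)"
    using int_exp int_h int_sq exp_le by (intro integral_mono) auto
  also have "\<dots> = 1 + l * expectation h + l\<^sup>2 * expectation (\<lambda>z. (h z)\<^sup>2)"
    using int_h int_sq by (simp add: prob_space)
  also have "\<dots> \<le> 1 + l\<^sup>2 * v"
    using centered variance by (simp add: mult_left_mono)
  also have "\<dots> \<le> exp (l\<^sup>2 * v)" by (rule exp_ge_add_one_self)
  finally show ?thesis by (simp add: ennreal_leI)
qed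

lemma (in prob_space) chernoff_PiM_sum:
  fixes h :: "'a \<Rightarrow> real" and a b v l :: real
  assumes [measurable]: "h \<in> borel_measurable M"
    and bounded: "\<And>z. z \<in> space M \<Longrightarrow> \<bar>h z\<bar> \<le> b"
    and centered: "expectation h = 0" and variance: "expectation (\<lambda>z. (h z)\<^sup>2) \<le> v"
    and "finite I" and l: "0 < l" "l * b \<le> 1"
  shows "measure (PiM I (\<lambda>_. M)) {\<omega> \<in> space (PiM I (\<lambda>_. M)). a \<le> (\<Sum>i\<in>I. h (\<omega> i))}
    \<le> exp (- l * a + card I * l\<^sup>2 * v)"
proof -
  interpret product: product_prob_space "\<lambda>_. M" I by unfold_locales
  let ?P = "PiM I (\<lambda>_. M)"
  have "emeasure ?P {\<omega> \<in> space ?P. a \<le> (\<Sum>i\<in>I. h (\<omega> i))}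
      \<le> ennreal (exp (- l * a)) * (\<integral>\<^sup>+\<omega>. ennreal (exp (l * (\<Sum>i\<in>I. h (\<omega> i)))) * indicator (space ?P) \<omega> \<partial>?P)"
    using l by (intro Chernoff_ineq_nn_integral_ge) auto
  also have "(\<integral>\<^sup>+\<omega>. ennreal (exp (l * (\<Sum>i\<in>I. h (\<omega> i)))) * indicator (space ?P) \<omega> \<partial>?P)
      = (\<integral>\<^sup>+\<omega>. (\<Prod>i\<in>I. ennreal (exp (l * h (\<omega> i)))) \<partial>?P)"
    using \<open>finite I\<close> by (intro nn_integral_cong) (simp add: sum_distrib_left exp_sum prod_ennreal)
  also have "\<dots> = (\<Prod>i\<in>I. \<integral>\<^sup>+z. ennreal (exp (l * h z)) \<partial>M)"
    using \<open>finite I\<close> by (intro product.product_nn_integral_prod) auto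
  also have "ennreal (exp (- l * a)) * \<dots> \<le> ennreal (exp (- l * a)) * (\<Prod>i\<in>I. ennreal (exp (l\<^sup>2 * v)))"
    by (intro mult_left_mono prod_mono_ennreal bernstein_mgf_bound[OF _ bounded centered variance l]) auto
  also have "(\<Prod>i\<in>I. ennreal (exp (l\<^sup>2 * v))) = ennreal (exp (card I * (l\<^sup>2 * v)))"
    by (simp add: exp_of_nat_mult ennreal_power)
  finally show ?thesis
    by (simp add: product.P.emeasure_eq_measure ennreal_le_iff mult.assoc flip: ennreal_mult exp_add)
qed

text \<open>The exponent \<open>l = 1 / (b + sqrt (N v / L))\<close> balances the two terms of the Chernoff bound
  without a case distinction on which of them dominates.\<close>

lemma (in prob_space) bernstein_inequality_PiM:
  fixes h :: "'a \<Rightarrow> real" and b v L :: real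
  assumes [measurable]: "h \<in> borel_measurable M"
    and bounded: "\<And>z. z \<in> space M \<Longrightarrow> \<bar>h z\<bar> \<le> b" and "0 < b"
    and centered: "expectation h = 0" and variance: "expectation (\<lambda>z. (h z)\<^sup>2) \<le> v"
    and "finite I" and "0 < L"
  shows "measure (PiM I (\<lambda>_. M))
      {\<omega> \<in> space (PiM I (\<lambda>_. M)). 2 * sqrt (card I * v * L) + 2 * b * L \<le> (\<Sum>i\<in>I. h (\<omega> i))}
    \<le> exp (- L)"
proof -
  let ?N = "real (card I)"
  define a where "a = 2 * sqrt (?N * v * L) + 2 * b * L"
  define w where "w = sqrt (?N * v / L)"
  define l where "l = 1 / (b + w)"
  have "0 \<le> expectation (\<lambda>z. (h z)\<^sup>2)" by simp
  then have "0 \<le> v" using variance by linarith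
  then have w: "0 \<le> w" "w\<^sup>2 = ?N * v / L" using \<open>0 < L\<close> by (auto simp: w_def)
  have l: "0 < l" "l * b \<le> 1" using \<open>0 < b\<close> w by (auto simp: l_def field_simps)
  have "sqrt (?N * v * L) = L * w"
    using w \<open>0 < L\<close> by (simp add: w_def real_sqrt_mult real_sqrt_divide field_simps)
  then have "l * a = 2 * L" using l \<open>0 < b\<close> w by (simp add: a_def l_def field_simps)
  have "w\<^sup>2 \<le> (b + w)\<^sup>2" using w(1) \<open>0 < b\<close> by (intro power_mono) auto
  then have "w\<^sup>2 / (b + w)\<^sup>2 \<le> 1" using w(1) \<open>0 < b\<close> by (simp add: divide_le_eq_1)
  moreover have "?N * l\<^sup>2 * v = L * (w\<^sup>2 / (b + w)\<^sup>2)"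
  proof -
    have "?N * v = L * w\<^sup>2" using w \<open>0 < L\<close> by simp
    moreover have "b + w > 0" using w \<open>0 < b\<close> by simp
    ultimately show ?thesis by (simp add: l_def field_simps)
  qed
  ultimately have "?N * l\<^sup>2 * v \<le> L"
    using mult_left_le[of "w\<^sup>2 / (b + w)\<^sup>2" L] \<open>0 < L\<close> by simp
  then have "- l * a + ?N * l\<^sup>2 * v \<le> - L" using \<open>l * a = 2 * L\<close> by linarith
  then show ?thesis
    unfolding a_def[symmetric]
    by (intro order_trans[OF chernoff_PiM_sum[OF _ bounded centered variance \<open>finite I\<close> l]]) simp_all
qed

lemma (in prob_space) PiM_support_set:
  assumes [measurable]: "{z \<in> space M. P z} \<in> sets M" and "AE z in M. P z" and "finite I"
  defines "S \<equiv> PiE I (\<lambda>_. {z \<in> space M. P z})"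
  shows "S \<in> sets (PiM I (\<lambda>_. M))" and "measure (PiM I (\<lambda>_. M)) S = 1"
proof -
  interpret product: product_prob_space "\<lambda>_. M" I by unfold_locales
  show "S \<in> sets (PiM I (\<lambda>_. M))"
    unfolding S_def by (rule sets_PiM_I_finite) (use \<open>finite I\<close> in auto)
  have "emeasure (PiM I (\<lambda>_. M)) S = (\<Prod>i\<in>I. emeasure M {z \<in> space M. P z})"
    unfolding S_def by (rule product.emeasure_PiM) (use \<open>finite I\<close> in auto)
  also have "\<dots> = 1"
    using prob_Collect_eq_1[of P] assms by (simp add: emeasure_eq_measure)
  finally show "measure (PiM I (\<lambda>_. M)) S = 1"
    by (simp add: measure_def)
qed

section \<open>Orthogonality to functions of a coordinate\<close>

lemma integrable_indicator_comp_mult: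
  fixes u :: "'a \<Rightarrow> real"
  assumes [measurable]: "T \<in> measurable M N" "A \<in> sets N" and "integrable M u"
  shows "integrable M (\<lambda>x. indicator A (T x) * u x)"
proof -
  have [measurable]: "u \<in> borel_measurable M" using assms(3) by simp
  show ?thesis by (intro Bochner_Integration.integrable_bound[OF assms(3)]) (auto simp: indicator_def)
qed

lemma emeasure_distr_density_eq_integral:
  fixes u :: "'a \<Rightarrow> real"
  assumes [measurable]: "T \<in> measurable M N" "A \<in> sets N"
    and "integrable M u" "\<And>x. 0 \<le> u x"
  shows "emeasure (distr (density M u) N T) A = ennreal (\<integral>x. indicator A (T x) * u x \<partial>M)"
proof -
  have [measurable]: "u \<in> borel_measurable M" using assms(3) by simp
  have "emeasure (distr (density M u) N T) A = (\<integral>\<^sup>+x. ennreal (indicator A (T x) * u x) \<partial>M)"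
    by (auto simp: emeasure_distr emeasure_density indicator_def intro!: nn_integral_cong)
  also have "\<dots> = ennreal (\<integral>x. indicator A (T x) * u x \<partial>M)"
    using assms by (intro nn_integral_eq_integral integrable_indicator_comp_mult[OF assms(1-3)]) auto
  finally show ?thesis .
qed

text \<open>If the signed measure \<open>A \<mapsto> \<integral> 1\<^sub>A(T x) \<phi> x\<close> vanishes, the image measures of the densities
  \<open>\<phi>\<^sup>+\<close> and \<open>\<phi>\<^sup>-\<close> under \<open>T\<close> coincide, hence integrate every bounded \<open>g\<close> alike.\<close>

lemma integral_comp_mult_eq_0:
  fixes \<phi> :: "'a \<Rightarrow> real" and g :: "'b \<Rightarrow> real"
  assumes T[measurable]: "T \<in> measurable M N" and \<phi>: "integrable M \<phi>"
    and vanish: "\<And>A. A \<in> sets N \<Longrightarrow> (\<integral>x. indicator A (T x) * \<phi> x \<partial>M) = 0"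
    and g[measurable]: "g \<in> borel_measurable N" and bounded: "\<And>y. y \<in> space N \<Longrightarrow> \<bar>g y\<bar> \<le> B"
  shows "(\<integral>x. g (T x) * \<phi> x \<partial>M) = 0"
proof -
  define p where "p = (\<lambda>x. max 0 (\<phi> x))"
  define m where "m = (\<lambda>x. max 0 (- \<phi> x))"
  have \<phi>_eq: "\<phi> x = p x - m x" for x by (simp add: p_def m_def)
  have int_p: "integrable M p" and int_m: "integrable M m"
    unfolding p_def m_def using \<phi> by auto
  have "distr (density M p) N T = distr (density M m) N T"
  proof (rule measure_eqI)
    fix A assume "A \<in> sets (distr (density M p) N T)"
    then have A: "A \<in> sets N" by simp
    have "(\<integral>x. indicator A (T x) * p x \<partial>M) = (\<integral>x. indicator A (T x) * m x \<partial>M)"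
      using vanish[OF A] integrable_indicator_comp_mult[OF T A] int_p int_m
      by (simp add: \<phi>_eq right_diff_distrib)
    then show "emeasure (distr (density M p) N T) A = emeasure (distr (density M m) N T) A"
      using emeasure_distr_density_eq_integral[OF T A int_p] emeasure_distr_density_eq_integral[OF T A int_m]
      by (simp add: p_def m_def)
  qed simp
  moreover have "(\<integral>x. g (T x) * u x \<partial>M) = integral\<^sup>L (distr (density M u) N T) g"
    if "u \<in> borel_measurable M" "\<And>x. 0 \<le> u x" for u
    using that by (simp add: integral_distr integral_density mult.commute)
  ultimately have "(\<integral>x. g (T x) * p x \<partial>M) = (\<integral>x. g (T x) * m x \<partial>M)"
    using int_p int_m by (simp add: p_def m_def)
  moreover have "integrable M (\<lambda>x. g (T x) * u x)" if "integrable M u" for u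
  proof (rule Bochner_Integration.integrable_bound)
    show "integrable M (\<lambda>x. B * u x)" using that by simp
    have "\<bar>g (T x)\<bar> * \<bar>u x\<bar> \<le> \<bar>B\<bar> * \<bar>u x\<bar>" if "x \<in> space M" for x
      using bounded[OF measurable_space[OF T that]] by (intro mult_right_mono) auto
    then show "AE x in M. norm (g (T x) * u x) \<le> norm (B * u x)"
      by (auto simp: abs_mult intro!: AE_I2)
  qed (use that in simp)
  ultimately show ?thesis
    using int_p int_m by (simp add: \<phi>_eq right_diff_distrib)
qed

section \<open>Finite covers in the sup norm\<close>

lemma abs_le_sup_norm_on:
  assumes "\<And>x. x \<in> X \<Longrightarrow> \<bar>f x\<bar> \<le> B" and "x \<in> X"
  shows "\<bar>f x\<bar> \<le> sup_norm_on X f"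
  unfolding sup_norm_on_def using assms by (intro cSUP_upper) (auto intro!: bdd_aboveI2)

lemma sup_norm_on_le:
  assumes "X \<noteq> {}" and "\<And>x. x \<in> X \<Longrightarrow> \<bar>f x\<bar> \<le> s"
  shows "sup_norm_on X f \<le> s"
  unfolding sup_norm_on_def using assms by (intro cSUP_least) auto

lemma sup_norm_on_diff_triangle:
  assumes "X \<noteq> {}" and "\<And>x. x \<in> X \<Longrightarrow> \<bar>f x\<bar> \<le> B" "\<And>x. x \<in> X \<Longrightarrow> \<bar>g x\<bar> \<le> B"
    "\<And>x. x \<in> X \<Longrightarrow> \<bar>h x\<bar> \<le> B"
  shows "sup_norm_on X (\<lambda>x. f x - h x) \<le> sup_norm_on X (\<lambda>x. f x - g x) + sup_norm_on X (\<lambda>x. h x - g x)"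
proof (rule sup_norm_on_le[OF \<open>X \<noteq> {}\<close>])
  fix x assume x: "x \<in> X"
  have "\<bar>f x - g x\<bar> \<le> sup_norm_on X (\<lambda>x. f x - g x)" "\<bar>h x - g x\<bar> \<le> sup_norm_on X (\<lambda>x. h x - g x)"
    using assms(2-4) by (intro abs_le_sup_norm_on[OF _ x, where B = "2 * B"]; smt (verit))+
  then show "\<bar>f x - h x\<bar> \<le> sup_norm_on X (\<lambda>x. f x - g x) + sup_norm_on X (\<lambda>x. h x - g x)"
    by linarith
qed

lemma compact_in_CX_finite_cover:
  assumes compact: "compact_in_CX X H" and bounded: "uniformly_bounded_on X H"
    and "X \<noteq> {}" and "0 < \<eta>"
  obtains F where "finite F" "F \<subseteq> H" "\<And>f. f \<in> H \<Longrightarrow> \<exists>g\<in>F. sup_norm_on X (\<lambda>x. f x - g x) < \<eta>"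
proof -
  obtain B where B: "\<And>f x. f \<in> H \<Longrightarrow> x \<in> X \<Longrightarrow> \<bar>f x\<bar> \<le> B"
    using bounded unfolding uniformly_bounded_on_def by blast
  have "\<exists>F. finite F \<and> F \<subseteq> H \<and> (\<forall>f\<in>H. \<exists>g\<in>F. sup_norm_on X (\<lambda>x. f x - g x) < \<eta>)"
  proof (rule ccontr)
    assume "\<not> ?thesis"
    then have no_cover: "\<exists>f\<in>H. \<forall>g\<in>F. \<not> sup_norm_on X (\<lambda>x. f x - g x) < \<eta>"
      if "finite F" "F \<subseteq> H" for F
      using that by meson
    let ?Q = "\<lambda>s n f. f \<in> H \<and> (\<forall>m<n. \<not> sup_norm_on X (\<lambda>x. f x - s m x) < \<eta>)"
    have "\<exists>s. \<forall>n::nat. ?Q s n (s n)"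
    proof (rule dependent_wellorder_choice)
      fix n and s :: "nat \<Rightarrow> 'a \<Rightarrow> real" assume "\<And>m. m < n \<Longrightarrow> ?Q s m (s m)"
      then have "s ` {..<n} \<subseteq> H" by auto
      then show "\<exists>f. ?Q s n f" using no_cover[of "s ` {..<n}"] by auto
    qed simp
    then obtain s :: "nat \<Rightarrow> 'a \<Rightarrow> real" where s_H: "\<And>n. s n \<in> H"
      and separated: "\<And>m n. m < n \<Longrightarrow> \<not> sup_norm_on X (\<lambda>x. s n x - s m x) < \<eta>"
      by blast
    obtain g r where "g \<in> H" and r: "strict_mono r"
      and lim: "(\<lambda>k. sup_norm_on X (\<lambda>x. s (r k) x - g x)) \<longlonglongrightarrow> 0"
      using compact s_H unfolding compact_in_CX_def by blast
    then obtain K where K: "\<And>k. K \<le> k \<Longrightarrow> sup_norm_on X (\<lambda>x. s (r k) x - g x) < \<eta> / 2"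
      using order_tendstoD(2)[OF lim, of "\<eta> / 2"] \<open>0 < \<eta>\<close> unfolding eventually_sequentially by auto
    have "sup_norm_on X (\<lambda>x. s (r (Suc K)) x - s (r K) x)
        \<le> sup_norm_on X (\<lambda>x. s (r (Suc K)) x - g x) + sup_norm_on X (\<lambda>x. s (r K) x - g x)"
      using \<open>X \<noteq> {}\<close> \<open>g \<in> H\<close> s_H B by (intro sup_norm_on_diff_triangle[where B = B]) auto
    also have "\<dots> < \<eta>" using K[of K] K[of "Suc K"] by simp
    finally show False
      using separated[of "r K" "r (Suc K)"] r by (simp add: strict_mono_def)
  qed
  with that show thesis by blast
qed

lemma covering_number_cover:
  assumes "compact_in_CX X H" and "uniformly_bounded_on X H" and "X \<noteq> {}" and "0 < \<eta>"
  obtains F where "finite F" "card F \<le> covering_number X H \<eta>" "F \<subseteq> H"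
    "\<And>f. f \<in> H \<Longrightarrow> \<exists>g\<in>F. sup_norm_on X (\<lambda>x. f x - g x) < \<eta>"
proof -
  obtain F where "finite F" "F \<subseteq> H" "\<forall>f\<in>H. \<exists>g\<in>F. sup_norm_on X (\<lambda>x. f x - g x) < \<eta>"
    using compact_in_CX_finite_cover[OF assms] by metis
  then have "\<exists>k F. finite F \<and> card F \<le> k \<and> F \<subseteq> H \<and>
      (\<forall>f\<in>H. \<exists>g\<in>F. sup_norm_on X (\<lambda>x. f x - g x) < \<eta>)"
    by blast
  then have "\<exists>F. finite F \<and> card F \<le> covering_number X H \<eta> \<and> F \<subseteq> H \<and>
      (\<forall>f\<in>H. \<exists>g\<in>F. sup_norm_on X (\<lambda>x. f x - g x) < \<eta>)"
    unfolding covering_number_def by (rule LeastI_ex)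
  with that show thesis by blast
qed

lemma Phi_pos: "0 < \<epsilon> \<Longrightarrow> 0 < q \<Longrightarrow> 0 < Phi \<epsilon> q"
  by (auto simp: Phi_def intro!: divide_pos_pos add_pos_pos mult_pos_pos)

lemma Phi_reciprocal_bounds:
  assumes "0 < \<epsilon>" "0 < q"
  shows "1 + \<epsilon> \<le> 1 / Phi \<epsilon> q - q * (1 + \<epsilon>)"
    and "\<epsilon> * (3 + \<epsilon>) / (1 + \<epsilon>) \<le> 1 / Phi \<epsilon> q - q * (1 + \<epsilon>)"
proof -
  have "1 / Phi \<epsilon> q - q * (1 + \<epsilon>) = (if \<epsilon> \<le> 1 then 1 + \<epsilon> else \<epsilon> * (3 + \<epsilon>) / (1 + \<epsilon>))"
    using assms by (simp add: Phi_def field_simps power2_eq_square)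
  moreover have "\<epsilon> * (3 + \<epsilon>) / (1 + \<epsilon>) \<le> 1 + \<epsilon> \<longleftrightarrow> \<epsilon> \<le> 1"
    using assms by (simp add: field_simps power2_eq_square)
  ultimately show "1 + \<epsilon> \<le> 1 / Phi \<epsilon> q - q * (1 + \<epsilon>)"
    and "\<epsilon> * (3 + \<epsilon>) / (1 + \<epsilon>) \<le> 1 / Phi \<epsilon> q - q * (1 + \<epsilon>)"
    by auto
qed

text \<open>With \<open>n = \<sigma> powr (1 / Phi \<epsilon> q)\<close>, every error term of the oracle inequality becomes a power
  of \<open>\<sigma>\<close>; the two lower bounds of \<open>Phi_reciprocal_bounds\<close> are exactly what makes them all
  at most \<open>\<sigma> powr (- \<epsilon>)\<close> (resp. its square).\<close>

lemma Phi_rate_exponents: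
  fixes n :: nat and \<epsilon> q \<sigma> :: real
  assumes "0 < \<epsilon>" "0 < q" and \<sigma>: "\<sigma> = real n powr Phi \<epsilon> q" "1 < \<sigma>"
  defines "S \<equiv> \<sigma> powr (q * (1 + \<epsilon>))" and "\<tau> \<equiv> \<sigma> powr (\<epsilon> / (1 + \<epsilon>))"
    and "r \<equiv> \<sigma> powr (- \<epsilon>)" and "\<eta> \<equiv> \<sigma> powr (- (1 + \<epsilon>))"
  shows "0 < real n" "1 \<le> S" "\<sigma> * \<eta> = r" "\<eta> powr (- q) = S"
    and "\<sigma> * S / n \<le> r" "\<tau>\<^sup>2 * S / n \<le> r" "truncation_scale \<epsilon> \<sigma> \<tau> * S / n \<le> r\<^sup>2"
    and "r = real n powr (- (\<epsilon> * Phi \<epsilon> q))"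
proof -
  define \<gamma> where "\<gamma> = 1 / Phi \<epsilon> q - q * (1 + \<epsilon>)"
  note \<gamma>_bounds = Phi_reciprocal_bounds[OF assms(1,2), folded \<gamma>_def]
  show n: "0 < real n"
    using \<sigma> by (cases n) auto
  have "0 < \<sigma>" using \<sigma>(2) by linarith
  have "real n = \<sigma> powr (q * (1 + \<epsilon>) + \<gamma>)"
    using Phi_pos[OF assms(1,2)] n by (simp add: \<sigma> \<gamma>_def powr_powr)
  then have scaled: "\<sigma> powr a * S / real n = \<sigma> powr (a - \<gamma>)" for a
    using \<open>0 < \<sigma>\<close> by (simp add: S_def powr_diff powr_add)
  have mono: "\<sigma> powr a \<le> \<sigma> powr b" if "a \<le> b" for a b
    using \<sigma> that by (intro powr_mono) auto
  have r_sq: "r\<^sup>2 = \<sigma> powr (- 2 * \<epsilon>)"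
    using \<open>0 < \<sigma>\<close> by (simp add: r_def power2_eq_square flip: powr_add)
  show "1 \<le> S" unfolding S_def using \<sigma> assms by (intro ge_one_powr_ge_zero) auto
  show "\<sigma> * \<eta> = r" using \<open>0 < \<sigma>\<close> by (simp add: \<eta>_def r_def powr_mult_base)
  show "\<eta> powr (- q) = S" by (simp add: \<eta>_def S_def powr_powr algebra_simps)
  show "\<sigma> * S / n \<le> r"
    using scaled[of 1] mono[of "1 - \<gamma>" "- \<epsilon>"] \<gamma>_bounds \<open>0 < \<sigma>\<close> by (simp add: r_def)
  have "\<tau>\<^sup>2 = \<sigma> powr (2 * \<epsilon> / (1 + \<epsilon>))"
    using \<open>0 < \<sigma>\<close> by (simp add: \<tau>_def power2_eq_square flip: powr_add)
  moreover have "2 * \<epsilon> / (1 + \<epsilon>) - \<gamma> \<le> - \<epsilon>"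
    using \<gamma>_bounds(2) assms(1) by (simp add: field_simps)
  ultimately show "\<tau>\<^sup>2 * S / n \<le> r"
    using scaled mono by (simp add: r_def)
  have "truncation_scale \<epsilon> \<sigma> \<tau> = \<sigma> powr (if \<epsilon> \<le> 1 then 1 - \<epsilon> else \<epsilon> / (1 + \<epsilon>) * (1 - \<epsilon>))"
    by (simp add: truncation_scale_def \<tau>_def powr_powr)
  moreover have "(if \<epsilon> \<le> 1 then 1 - \<epsilon> else \<epsilon> / (1 + \<epsilon>) * (1 - \<epsilon>)) - \<gamma> \<le> - 2 * \<epsilon>"
    using \<gamma>_bounds assms(1) by (auto simp: field_simps)
  ultimately show "truncation_scale \<epsilon> \<sigma> \<tau> * S / n \<le> r\<^sup>2"
    using scaled mono r_sq by simp
  show "r = real n powr (- (\<epsilon> * Phi \<epsilon> q))"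
    by (simp add: r_def \<sigma> powr_powr mult.commute)
qed

lemma ln_confidence_le:
  fixes N c S \<delta> :: real
  assumes "1 \<le> N" "ln N \<le> c * S" "1 \<le> S" "0 \<le> c" "0 < \<delta>" "\<delta> < 1"
  shows "0 < ln (N / \<delta>)" and "ln (N / \<delta>) \<le> (c + ln (2 / \<delta>)) * S" and "ln 2 \<le> ln (2 / \<delta>)"
proof -
  show "0 < ln (N / \<delta>)" using assms by simp
  show "ln 2 \<le> ln (2 / \<delta>)" using assms by (simp add: field_simps)
  have "ln (1 / \<delta>) \<le> ln (2 / \<delta>)" "0 \<le> ln (2 / \<delta>)" using assms by (simp_all add: field_simps)
  moreover have "ln (N / \<delta>) = ln N + ln (1 / \<delta>)" using assms by (simp add: ln_div)
  moreover have "ln (2 / \<delta>) * 1 \<le> ln (2 / \<delta>) * S"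
    using \<open>1 \<le> S\<close> \<open>0 \<le> ln (2 / \<delta>)\<close> by (rule mult_left_mono)
  ultimately show "ln (N / \<delta>) \<le> (c + ln (2 / \<delta>)) * S"
    using \<open>ln N \<le> c * S\<close> by (simp add: distrib_right)
qed

section \<open>Huber regression\<close>

locale huber_regression = prob_space \<rho> for \<rho> :: "('a::euclidean_space \<times> real) measure" +
  fixes X :: "'a set" and H :: "('a \<Rightarrow> real) set" and fstar :: "'a \<Rightarrow> real" and \<epsilon> :: real
  assumes sets_\<rho>: "sets \<rho> = sets borel"
    and X_borel [measurable]: "X \<in> sets borel"
    and support: "AE z in \<rho>. fst z \<in> X"
    and regression: "is_regression_function \<rho> X fstar"
    and H_continuous: "subset_CX X H"
    and H_bounded: "uniformly_bounded_on X H"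
    and fstar_in_H: "fstar \<in> H"
    and \<epsilon>_pos: "0 < \<epsilon>"
    and moment_integrable: "integrable \<rho> (\<lambda>z. \<bar>snd z\<bar> powr (1 + \<epsilon>))"
begin

lemma measurable_fst_snd [measurable]: "fst \<in> borel_measurable \<rho>" "snd \<in> borel_measurable \<rho>"
  by (simp_all add: measurable_cong_sets[OF sets_\<rho> refl] borel_prod[symmetric])

lemma X_nonempty: "X \<noteq> {}"
  using support AE_False by force

definition sup_bound :: real where
  "sup_bound = max (sup_norm_on X fstar) (SUP f\<in>H. sup_norm_on X f)"

lemma abs_le_sup_bound:
  assumes "f \<in> H" "x \<in> X"
  shows "\<bar>f x\<bar> \<le> sup_bound"
proof -
  obtain B where B: "\<And>f x. f \<in> H \<Longrightarrow> x \<in> X \<Longrightarrow> \<bar>f x\<bar> \<le> B"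
    using H_bounded unfolding uniformly_bounded_on_def by blast
  have "\<bar>f x\<bar> \<le> sup_norm_on X f"
    using assms B by (intro abs_le_sup_norm_on) auto
  also have "\<dots> \<le> (SUP f\<in>H. sup_norm_on X f)"
    using assms B X_nonempty by (intro cSUP_upper bdd_aboveI2 sup_norm_on_le) auto
  also have "\<dots> \<le> sup_bound" by (simp add: sup_bound_def)
  finally show ?thesis .
qed

lemma sup_bound_nonneg: "0 \<le> sup_bound"
  using abs_le_sup_bound[OF fstar_in_H] X_nonempty by (meson abs_ge_zero all_not_in_conv order_trans)

text \<open>Members of \<open>H\<close> are only continuous on \<open>X\<close>; extending them by zero makes them Borel measurable
  and globally bounded, and changes nothing \<open>\<rho>\<close>-almost everywhere.\<close>

definition zero_ext :: "('a \<Rightarrow> real) \<Rightarrow> 'a \<Rightarrow> real" where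
  "zero_ext f x = indicator X x * f x"

lemma zero_ext_measurable [measurable]: "f \<in> H \<Longrightarrow> zero_ext f \<in> borel_measurable borel"
  using borel_measurable_continuous_on_indicator[OF X_borel, of f] H_continuous
  unfolding subset_CX_def zero_ext_def by simp

lemma abs_zero_ext_le: "f \<in> H \<Longrightarrow> \<bar>zero_ext f x\<bar> \<le> sup_bound"
  using abs_le_sup_bound sup_bound_nonneg by (auto simp: zero_ext_def indicator_def)

lemma abs_zero_ext_diff_le: "f \<in> H \<Longrightarrow> g \<in> H \<Longrightarrow> \<bar>zero_ext f x - zero_ext g x\<bar> \<le> 2 * sup_bound"
  using abs_zero_ext_le[of f x] abs_zero_ext_le[of g x] by linarith

lemma integrable_snd: "integrable \<rho> snd"
proof (rule Bochner_Integration.integrable_bound)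
  show "integrable \<rho> (\<lambda>z. 1 + \<bar>snd z\<bar> powr (1 + \<epsilon>))" using moment_integrable by simp
  have "\<bar>y\<bar> \<le> 1 + \<bar>y\<bar> powr (1 + \<epsilon>)" for y :: real
  proof (cases "\<bar>y\<bar> \<le> 1")
    case False
    then have "\<bar>y\<bar> powr 1 \<le> \<bar>y\<bar> powr (1 + \<epsilon>)" using \<epsilon>_pos by (intro powr_mono) auto
    then show ?thesis using False by simp
  qed (simp add: add_increasing2)
  then show "AE z in \<rho>. norm (snd z) \<le> norm (1 + \<bar>snd z\<bar> powr (1 + \<epsilon>))" by simp
qed simp

definition moment :: real where
  "moment = (\<integral>z. \<bar>snd z\<bar> powr (1 + \<epsilon>) \<partial>\<rho>)"

definition shifted_moment :: real where
  "shifted_moment = (\<integral>z. (\<bar>snd z\<bar> + sup_bound) powr (1 + \<epsilon>) \<partial>\<rho>)"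

lemma moment_nonneg: "0 \<le> moment"
  unfolding moment_def by (rule integral_nonneg_AE) simp

lemma shifted_moment_nonneg: "0 \<le> shifted_moment"
  unfolding shifted_moment_def by (rule integral_nonneg_AE) simp

lemma integrable_shifted_moment: "integrable \<rho> (\<lambda>z. (\<bar>snd z\<bar> + sup_bound) powr (1 + \<epsilon>))"
proof (rule Bochner_Integration.integrable_bound)
  show "integrable \<rho> (\<lambda>z. 2 powr (1 + \<epsilon>) * (\<bar>snd z\<bar> powr (1 + \<epsilon>) + sup_bound powr (1 + \<epsilon>)))"
    using moment_integrable by simp
  have "(\<bar>y\<bar> + sup_bound) powr (1 + \<epsilon>) \<le> (2 * max \<bar>y\<bar> sup_bound) powr (1 + \<epsilon>)" for y :: real
    using sup_bound_nonneg \<epsilon>_pos by (intro powr_mono2) auto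
  also have "(2 * max \<bar>y\<bar> sup_bound) powr (1 + \<epsilon>)
      \<le> 2 powr (1 + \<epsilon>) * (\<bar>y\<bar> powr (1 + \<epsilon>) + sup_bound powr (1 + \<epsilon>))" for y :: real
    using sup_bound_nonneg by (simp add: powr_mult max_def)
  finally show "AE z in \<rho>. norm ((\<bar>snd z\<bar> + sup_bound) powr (1 + \<epsilon>))
      \<le> norm (2 powr (1 + \<epsilon>) * (\<bar>snd z\<bar> powr (1 + \<epsilon>) + sup_bound powr (1 + \<epsilon>)))"
    by (intro AE_I2) simp
qed simp

definition excess_loss :: "real \<Rightarrow> ('a \<Rightarrow> real) \<Rightarrow> 'a \<times> real \<Rightarrow> real" where
  "excess_loss \<sigma> f z = huber \<sigma> (snd z - zero_ext f (fst z)) - huber \<sigma> (snd z - zero_ext fstar (fst z))"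

definition sq_dist :: "('a \<Rightarrow> real) \<Rightarrow> real" where
  "sq_dist f = (\<integral>z. (zero_ext f (fst z) - zero_ext fstar (fst z))\<^sup>2 \<partial>\<rho>)"

lemma excess_loss_measurable [measurable]: "f \<in> H \<Longrightarrow> excess_loss \<sigma> f \<in> borel_measurable \<rho>"
  unfolding excess_loss_def huber_eq_sq_minus_excess using fstar_in_H by measurable

lemma abs_excess_loss_le:
  assumes "f \<in> H" "0 < \<sigma>"
  shows "\<bar>excess_loss \<sigma> f z\<bar> \<le> 2 * \<bar>zero_ext f (fst z) - zero_ext fstar (fst z)\<bar> * min (\<bar>snd z\<bar> + sup_bound) \<sigma>"
proof -
  let ?a = "snd z - zero_ext f (fst z)" and ?b = "snd z - zero_ext fstar (fst z)"
  have "max \<bar>?a\<bar> \<bar>?b\<bar> \<le> \<bar>snd z\<bar> + sup_bound"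
    using abs_zero_ext_le[OF assms(1)] abs_zero_ext_le[OF fstar_in_H] by (smt (verit))
  then have "min (max \<bar>?a\<bar> \<bar>?b\<bar>) \<sigma> \<le> min (\<bar>snd z\<bar> + sup_bound) \<sigma>"
    by (intro min.mono order_refl)
  moreover have "\<bar>?a - ?b\<bar> = \<bar>zero_ext f (fst z) - zero_ext fstar (fst z)\<bar>" by linarith
  ultimately show ?thesis
    unfolding excess_loss_def
    by (smt (verit, best) abs_ge_zero huber_diff_le[OF assms(2), of ?a ?b] mult_left_mono)
qed

lemma abs_excess_loss_le_const: "f \<in> H \<Longrightarrow> 0 < \<sigma> \<Longrightarrow> \<bar>excess_loss \<sigma> f z\<bar> \<le> 4 * sup_bound * \<sigma>"
  using abs_excess_loss_le[of f \<sigma> z] abs_zero_ext_diff_le[OF _ fstar_in_H, of f "fst z"] sup_bound_nonneg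
  by (smt (verit, best) min.cobounded2 mult_mono abs_ge_zero)

lemma excess_loss_le_shift:
  assumes "f \<in> H" "g \<in> H" "0 < \<sigma>"
  shows "excess_loss \<sigma> f z \<le> excess_loss \<sigma> g z + 2 * \<sigma> * \<bar>zero_ext f (fst z) - zero_ext g (fst z)\<bar>"
proof -
  let ?a = "snd z - zero_ext f (fst z)" and ?b = "snd z - zero_ext g (fst z)"
  have "\<bar>huber \<sigma> ?a - huber \<sigma> ?b\<bar> \<le> 2 * \<bar>?a - ?b\<bar> * \<sigma>"
    using huber_diff_le[OF assms(3), of ?a ?b] by (smt (verit) abs_ge_zero min.cobounded2 mult_left_mono)
  moreover have "\<bar>?a - ?b\<bar> = \<bar>zero_ext f (fst z) - zero_ext g (fst z)\<bar>" by linarith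
  ultimately show ?thesis unfolding excess_loss_def by (simp add: mult_ac)
qed

lemma integrable_excess_loss: "f \<in> H \<Longrightarrow> 0 < \<sigma> \<Longrightarrow> integrable \<rho> (excess_loss \<sigma> f)"
  by (intro integrable_const_bound[where B = "4 * sup_bound * \<sigma>"] AE_I2)
     (auto simp: abs_excess_loss_le_const)

lemma integrable_excess_loss_sq:
  assumes "f \<in> H" "0 < \<sigma>"
  shows "integrable \<rho> (\<lambda>z. (excess_loss \<sigma> f z)\<^sup>2)"
proof -
  have "(excess_loss \<sigma> f z)\<^sup>2 \<le> (4 * sup_bound * \<sigma>)\<^sup>2" for z
    using power_mono[OF abs_excess_loss_le_const[OF assms] abs_ge_zero, where n = 2] by simp
  then show ?thesis
    using assms by (intro integrable_const_bound[where B = "(4 * sup_bound * \<sigma>)\<^sup>2"] AE_I2) auto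
qed

lemma integrable_sq_dist:
  assumes "f \<in> H"
  shows "integrable \<rho> (\<lambda>z. (zero_ext f (fst z) - zero_ext fstar (fst z))\<^sup>2)"
proof -
  have "(zero_ext f x - zero_ext fstar x)\<^sup>2 \<le> (2 * sup_bound)\<^sup>2" for x
    using power_mono[OF abs_zero_ext_diff_le[OF assms fstar_in_H] abs_ge_zero, where n = 2] by simp
  then show ?thesis
    using assms fstar_in_H by (intro integrable_const_bound[where B = "(2 * sup_bound)\<^sup>2"] AE_I2) auto
qed

lemma sq_dist_nonneg: "0 \<le> sq_dist f"
  unfolding sq_dist_def by (rule integral_nonneg_AE) simp

lemma sq_dist_eq_set_integral:
  assumes "f \<in> H"
  shows "(LINT x:X|distr \<rho> borel fst. (f x - fstar x)\<^sup>2) = sq_dist f"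
proof -
  have "(LINT x:X|distr \<rho> borel fst. (f x - fstar x)\<^sup>2) = (\<integral>x. (zero_ext f x - zero_ext fstar x)\<^sup>2 \<partial>distr \<rho> borel fst)"
    unfolding set_lebesgue_integral_def
    by (intro Bochner_Integration.integral_cong) (auto simp: zero_ext_def indicator_def)
  also have "\<dots> = sq_dist f"
    unfolding sq_dist_def using assms fstar_in_H by (subst integral_distr) auto
  finally show ?thesis .
qed

definition bias_const :: real where
  "bias_const = 4 * sup_bound * moment * 2 powr \<epsilon>"

lemma bias_const_nonneg: "0 \<le> bias_const"
  using sup_bound_nonneg moment_nonneg by (simp add: bias_const_def)

lemma residual_orthogonal:
  assumes [measurable]: "g \<in> borel_measurable borel" and bounded: "\<And>x. \<bar>g x\<bar> \<le> B"
  shows "(\<integral>z. g (fst z) * (snd z - zero_ext fstar (fst z)) \<partial>\<rho>) = 0"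
proof -
  have int_fstar: "integrable \<rho> (\<lambda>z. zero_ext fstar (fst z))"
    using fstar_in_H abs_zero_ext_le[OF fstar_in_H]
    by (intro integrable_const_bound[where B = sup_bound] AE_I2) auto
  have vanish: "(\<integral>z. indicator A (fst z) * (snd z - zero_ext fstar (fst z)) \<partial>\<rho>) = 0"
    if [measurable]: "A \<in> sets borel" for A
  proof -
    have "(\<integral>z. indicator A (fst z) * snd z \<partial>\<rho>) = (\<integral>z. indicator A (fst z) * zero_ext fstar (fst z) \<partial>\<rho>)"
      using regression unfolding is_regression_function_def
      by (simp add: zero_ext_def indicator_inter_arith mult_ac)
    moreover have "integrable \<rho> (\<lambda>z. indicator A (fst z) * snd z)"
      by (rule integrable_indicator_comp_mult[OF _ that integrable_snd]) simp
    moreover have "integrable \<rho> (\<lambda>z. indicator A (fst z) * zero_ext fstar (fst z))"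
      by (rule integrable_indicator_comp_mult[OF _ that int_fstar]) simp
    ultimately show ?thesis by (simp add: right_diff_distrib)
  qed
  show ?thesis
    using integrable_snd int_fstar bounded
    by (intro integral_comp_mult_eq_0[where N = borel and B = B, OF _ _ vanish]) auto
qed

definition sq_excess_loss :: "('a \<Rightarrow> real) \<Rightarrow> 'a \<times> real \<Rightarrow> real" where
  "sq_excess_loss f z = (snd z - zero_ext f (fst z))\<^sup>2 - (snd z - zero_ext fstar (fst z))\<^sup>2"

text \<open>Expanding the square, the cross term is the residual \<open>Y - f\<^sup>\<star>(X)\<close> times a bounded function of
  \<open>X\<close>, which integrates to zero.\<close>

lemma sq_excess_loss_integrable_expectation:
  assumes f: "f \<in> H"
  shows "integrable \<rho> (sq_excess_loss f)" and "expectation (sq_excess_loss f) = sq_dist f"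
proof -
  define \<Delta> where "\<Delta> = (\<lambda>x. zero_ext f x - zero_ext fstar x)"
  have [measurable]: "\<Delta> \<in> borel_measurable borel" unfolding \<Delta>_def using f fstar_in_H by measurable
  have \<Delta>_bound: "\<bar>\<Delta> x\<bar> \<le> 2 * sup_bound" for x
    unfolding \<Delta>_def by (rule abs_zero_ext_diff_le[OF f fstar_in_H])
  have sq_excess_eq: "sq_excess_loss f = (\<lambda>z. (\<Delta> (fst z))\<^sup>2 - 2 * (\<Delta> (fst z) * (snd z - zero_ext fstar (fst z))))"
    by (auto simp: sq_excess_loss_def \<Delta>_def power2_eq_square algebra_simps)
  have int_cross: "integrable \<rho> (\<lambda>z. \<Delta> (fst z) * (snd z - zero_ext fstar (fst z)))"
  proof (rule Bochner_Integration.integrable_bound)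
    show "integrable \<rho> (\<lambda>z. 2 * sup_bound * (\<bar>snd z\<bar> + sup_bound))"
      using integrable_snd by simp
    have "\<bar>snd z - zero_ext fstar (fst z)\<bar> \<le> \<bar>snd z\<bar> + sup_bound" for z
      using abs_zero_ext_le[OF fstar_in_H, of "fst z"] by linarith
    then show "AE z in \<rho>. norm (\<Delta> (fst z) * (snd z - zero_ext fstar (fst z)))
        \<le> norm (2 * sup_bound * (\<bar>snd z\<bar> + sup_bound))"
      using \<Delta>_bound sup_bound_nonneg by (intro AE_I2) (auto simp: abs_mult intro!: mult_mono)
  qed (use fstar_in_H in simp)
  show "integrable \<rho> (sq_excess_loss f)"
    using int_cross integrable_sq_dist[OF f] by (simp add: sq_excess_eq \<Delta>_def)
  have "(\<integral>z. \<Delta> (fst z) * (snd z - zero_ext fstar (fst z)) \<partial>\<rho>) = 0"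
    using \<Delta>_bound by (intro residual_orthogonal) auto
  then show "expectation (sq_excess_loss f) = sq_dist f"
    using int_cross integrable_sq_dist[OF f] by (simp add: sq_excess_eq sq_dist_def \<Delta>_def)
qed

lemma abs_excess_loss_minus_sq_excess_le:
  assumes f: "f \<in> H" and \<sigma>: "2 * sup_bound < \<sigma>"
  shows "\<bar>excess_loss \<sigma> f z - sq_excess_loss f z\<bar>
    \<le> 4 * sup_bound * (\<bar>snd z\<bar> powr (1 + \<epsilon>) * (\<sigma> / 2) powr (- \<epsilon>))"
proof -
  let ?a = "snd z - zero_ext f (fst z)" and ?b = "snd z - zero_ext fstar (fst z)"
  have "max \<bar>?a\<bar> \<bar>?b\<bar> \<le> \<bar>snd z\<bar> + sup_bound"
    using abs_zero_ext_le[OF f] abs_zero_ext_le[OF fstar_in_H] by (smt (verit))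
  then have "max (max \<bar>?a\<bar> \<bar>?b\<bar> - \<sigma>) 0 \<le> \<bar>snd z\<bar> powr (1 + \<epsilon>) * (\<sigma> / 2) powr (- \<epsilon>)"
    using truncation_excess_le_moment[OF sup_bound_nonneg \<sigma> \<epsilon>_pos, of "snd z"] by linarith
  moreover have "\<bar>?a - ?b\<bar> \<le> 2 * sup_bound"
    using abs_zero_ext_diff_le[OF fstar_in_H f, of "fst z"] by simp
  moreover have "\<bar>excess_loss \<sigma> f z - sq_excess_loss f z\<bar>
      \<le> 2 * \<bar>?a - ?b\<bar> * max (max \<bar>?a\<bar> \<bar>?b\<bar> - \<sigma>) 0"
    unfolding excess_loss_def sq_excess_loss_def by (rule huber_diff_sq_diff_le)
  ultimately show ?thesis
    by (smt (verit, best) abs_ge_zero max.cobounded2 mult_mono)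
qed

lemma expectation_excess_loss:
  assumes f: "f \<in> H" and \<sigma>: "2 * sup_bound < \<sigma>"
  shows "\<bar>expectation (excess_loss \<sigma> f) - sq_dist f\<bar> \<le> bias_const * \<sigma> powr (- \<epsilon>)"
proof -
  have "0 < \<sigma>" using \<sigma> sup_bound_nonneg by linarith
  note sq_excess = sq_excess_loss_integrable_expectation[OF f]
  have "\<bar>expectation (excess_loss \<sigma> f) - sq_dist f\<bar>
      = \<bar>expectation (\<lambda>z. excess_loss \<sigma> f z - sq_excess_loss f z)\<bar>"
    using integrable_excess_loss[OF f \<open>0 < \<sigma>\<close>] sq_excess by simp
  also have "\<dots> \<le> expectation (\<lambda>z. 4 * sup_bound * (\<bar>snd z\<bar> powr (1 + \<epsilon>) * (\<sigma> / 2) powr (- \<epsilon>)))"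
    using integrable_excess_loss[OF f \<open>0 < \<sigma>\<close>] sq_excess moment_integrable
      abs_excess_loss_minus_sq_excess_le[OF f \<sigma>]
    by (intro order_trans[OF integral_abs_bound] integral_mono) auto
  also have "\<dots> = bias_const * \<sigma> powr (- \<epsilon>)"
    using \<open>0 < \<sigma>\<close> by (simp add: bias_const_def moment_def powr_divide powr_minus_divide field_simps)
  finally show ?thesis .
qed

lemma second_moment_excess_loss:
  assumes f: "f \<in> H" and "0 < \<sigma>" "0 < \<tau>"
  shows "expectation (\<lambda>z. (excess_loss \<sigma> f z)\<^sup>2)
    \<le> 4 * \<tau>\<^sup>2 * sq_dist f + 16 * sup_bound\<^sup>2 * shifted_moment * truncation_scale \<epsilon> \<sigma> \<tau>"
proof -
  let ?\<Lambda> = "truncation_scale \<epsilon> \<sigma> \<tau>"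
  have pointwise: "(excess_loss \<sigma> f z)\<^sup>2 \<le> 4 * \<tau>\<^sup>2 * (zero_ext f (fst z) - zero_ext fstar (fst z))\<^sup>2
      + 16 * sup_bound\<^sup>2 * ((\<bar>snd z\<bar> + sup_bound) powr (1 + \<epsilon>) * ?\<Lambda>)" for z
  proof -
    define \<Delta>2 where "\<Delta>2 = (zero_ext f (fst z) - zero_ext fstar (fst z))\<^sup>2"
    define P where "P = (\<bar>snd z\<bar> + sup_bound) powr (1 + \<epsilon>) * ?\<Lambda>"
    have "\<Delta>2 \<le> (2 * sup_bound)\<^sup>2"
      unfolding \<Delta>2_def
      using power_mono[OF abs_zero_ext_diff_le[OF f fstar_in_H] abs_ge_zero, where n = 2] by simp
    have "0 \<le> P" "0 \<le> \<Delta>2" by (simp_all add: P_def \<Delta>2_def truncation_scale_nonneg)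
    have "(excess_loss \<sigma> f z)\<^sup>2 \<le> 4 * \<Delta>2 * (min (\<bar>snd z\<bar> + sup_bound) \<sigma>)\<^sup>2"
      using power_mono[OF abs_excess_loss_le[OF f \<open>0 < \<sigma>\<close>, of z] abs_ge_zero, where n = 2]
      by (simp add: \<Delta>2_def power_mult_distrib)
    also have "\<dots> \<le> 4 * \<Delta>2 * (\<tau>\<^sup>2 + P)"
      unfolding P_def using sup_bound_nonneg assms \<epsilon>_pos \<open>0 \<le> \<Delta>2\<close>
      by (intro mult_left_mono sq_le_truncation_moment) auto
    also have "\<dots> \<le> 4 * \<tau>\<^sup>2 * \<Delta>2 + 4 * (2 * sup_bound)\<^sup>2 * P"
      using mult_right_mono[OF \<open>\<Delta>2 \<le> (2 * sup_bound)\<^sup>2\<close> \<open>0 \<le> P\<close>] by (simp add: algebra_simps)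
    finally have "(excess_loss \<sigma> f z)\<^sup>2 \<le> 4 * \<tau>\<^sup>2 * \<Delta>2 + 4 * (2 * sup_bound)\<^sup>2 * P" .
    then show ?thesis by (simp add: \<Delta>2_def P_def power_mult_distrib)
  qed
  have "expectation (\<lambda>z. (excess_loss \<sigma> f z)\<^sup>2)
      \<le> expectation (\<lambda>z. 4 * \<tau>\<^sup>2 * (zero_ext f (fst z) - zero_ext fstar (fst z))\<^sup>2
        + 16 * sup_bound\<^sup>2 * ((\<bar>snd z\<bar> + sup_bound) powr (1 + \<epsilon>) * ?\<Lambda>))"
    using integrable_excess_loss_sq[OF f \<open>0 < \<sigma>\<close>] integrable_sq_dist[OF f] integrable_shifted_moment pointwise
    by (intro integral_mono) auto
  also have "\<dots> = 4 * \<tau>\<^sup>2 * sq_dist f + 16 * sup_bound\<^sup>2 * shifted_moment * ?\<Lambda>"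
    using integrable_sq_dist[OF f] integrable_shifted_moment by (simp add: sq_dist_def shifted_moment_def)
  finally show ?thesis .
qed

section \<open>Oracle inequality\<close>

abbreviation sample_space :: "nat \<Rightarrow> (nat \<Rightarrow> 'a \<times> real) measure" where
  "sample_space n \<equiv> PiM {..<n} (\<lambda>_. \<rho>)"

definition deviation_event :: "nat \<Rightarrow> real \<Rightarrow> real \<Rightarrow> ('a \<Rightarrow> real) \<Rightarrow> (nat \<Rightarrow> 'a \<times> real) set" where
  "deviation_event n \<sigma> L g = {\<omega> \<in> space (sample_space n).
     2 * sqrt (n * expectation (\<lambda>z. (excess_loss \<sigma> g z)\<^sup>2) * L) + 2 * (8 * (sup_bound + 1) * \<sigma>) * L
       \<le> (\<Sum>i<n. expectation (excess_loss \<sigma> g) - excess_loss \<sigma> g (\<omega> i))}"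

lemma deviation_event_sets: "g \<in> H \<Longrightarrow> deviation_event n \<sigma> L g \<in> sets (sample_space n)"
  unfolding deviation_event_def by measurable

lemma prob_deviation_event_le:
  assumes g: "g \<in> H" and "0 < \<sigma>" "0 < L"
  shows "measure (sample_space n) (deviation_event n \<sigma> L g) \<le> exp (- L)"
proof -
  define E where "E = expectation (excess_loss \<sigma> g)"
  have "\<bar>E\<bar> \<le> expectation (\<lambda>z. 4 * sup_bound * \<sigma>)"
    unfolding E_def using integrable_excess_loss[OF g \<open>0 < \<sigma>\<close>] abs_excess_loss_le_const[OF g \<open>0 < \<sigma>\<close>]
    by (intro order_trans[OF integral_abs_bound] integral_mono) auto
  then have bounded: "\<bar>E - excess_loss \<sigma> g z\<bar> \<le> 8 * (sup_bound + 1) * \<sigma>" for z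
    using abs_excess_loss_le_const[OF g \<open>0 < \<sigma>\<close>, of z] \<open>0 < \<sigma>\<close> sup_bound_nonneg
    by (simp add: prob_space algebra_simps)
  have "expectation (\<lambda>z. E - excess_loss \<sigma> g z) = 0"
    using integrable_excess_loss[OF g \<open>0 < \<sigma>\<close>] by (simp add: E_def prob_space)
  moreover have "expectation (\<lambda>z. (E - excess_loss \<sigma> g z)\<^sup>2) = expectation (\<lambda>z. (excess_loss \<sigma> g z)\<^sup>2) - E\<^sup>2"
    using variance_eq[OF integrable_excess_loss[OF g \<open>0 < \<sigma>\<close>] integrable_excess_loss_sq[OF g \<open>0 < \<sigma>\<close>]]
    by (simp add: E_def power2_commute)
  ultimately have "measure (sample_space n)
      {\<omega> \<in> space (sample_space n). 2 * sqrt (card {..<n} * expectation (\<lambda>z. (excess_loss \<sigma> g z)\<^sup>2) * L)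
         + 2 * (8 * (sup_bound + 1) * \<sigma>) * L \<le> (\<Sum>i\<in>{..<n}. E - excess_loss \<sigma> g (\<omega> i))} \<le> exp (- L)"
    using g bounded sup_bound_nonneg \<open>0 < \<sigma>\<close> \<open>0 < L\<close>
    by (intro bernstein_inequality_PiM) auto
  then show ?thesis
    by (simp add: deviation_event_def E_def)
qed

lemma good_sample_event:
  assumes "finite F" "F \<subseteq> H" "0 < \<sigma>" "0 < L"
  obtains A where "A \<in> sets (sample_space n)"
    and "1 - card F * exp (- L) \<le> measure (sample_space n) A"
    and "\<And>\<omega> i. \<omega> \<in> A \<Longrightarrow> i < n \<Longrightarrow> fst (\<omega> i) \<in> X"
    and "\<And>\<omega> g. \<omega> \<in> A \<Longrightarrow> g \<in> F \<Longrightarrow> \<omega> \<notin> deviation_event n \<sigma> L g"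
proof -
  interpret product: product_prob_space "\<lambda>_. \<rho>" "{..<n}" by unfold_locales
  define S where "S = PiE {..<n} (\<lambda>_. {z \<in> space \<rho>. fst z \<in> X})"
  have S: "S \<in> sets (sample_space n)" "measure (sample_space n) S = 1"
    unfolding S_def by (intro PiM_support_set support; simp)+
  define U where "U = (\<Union>g\<in>F. deviation_event n \<sigma> L g)"
  have U: "U \<in> sets (sample_space n)"
    unfolding U_def using assms by (intro sets.finite_UN deviation_event_sets) auto
  have "measure (sample_space n) U \<le> (\<Sum>g\<in>F. measure (sample_space n) (deviation_event n \<sigma> L g))"
    unfolding U_def using assms by (intro measure_UNION_le deviation_event_sets) auto
  also have "\<dots> \<le> (\<Sum>g\<in>F. exp (- L))"
    using assms by (intro sum_mono prob_deviation_event_le) auto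
  finally have "1 - card F * exp (- L) \<le> measure (sample_space n) (S - U)"
    using S U product.P.finite_measure_Diff'[OF S(1) U] product.P.finite_measure_mono[of "S \<inter> U" U]
    by auto
  moreover have "fst (\<omega> i) \<in> X" if "\<omega> \<in> S - U" "i < n" for \<omega> i
    using that by (auto simp: S_def)
  ultimately show thesis
    using S U by (intro that[of "S - U"]) (auto simp: U_def)
qed

lemma abs_zero_ext_diff_le_sup_norm:
  assumes "f \<in> H" "g \<in> H"
  shows "\<bar>zero_ext f x - zero_ext g x\<bar> \<le> sup_norm_on X (\<lambda>x. f x - g x)"
proof -
  have bound: "\<bar>f y - g y\<bar> \<le> sup_norm_on X (\<lambda>x. f x - g x)" if "y \<in> X" for y
    using abs_le_sup_bound[OF assms(1)] abs_le_sup_bound[OF assms(2)]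
    by (intro abs_le_sup_norm_on[OF _ that, where B = "2 * sup_bound"]) fastforce
  obtain y where "y \<in> X" using X_nonempty by blast
  then show ?thesis
    using bound[of x] bound[of y] by (cases "x \<in> X") (auto simp: zero_ext_def intro: order_trans)
qed

text \<open>The empirical excess loss of \<open>f\<close> is nonpositive and that of \<open>g\<close> exceeds it by at most
  \<open>2 \<sigma> \<eta>\<close>; typicality of the sample for \<open>g\<close> transfers this to the mean excess loss of \<open>g\<close>.\<close>

lemma erm_sq_dist_le:
  fixes n :: nat and \<omega> :: "nat \<Rightarrow> 'a \<times> real"
  assumes "0 < n" and \<sigma>: "2 * sup_bound < \<sigma>" and f: "f \<in> H" and g: "g \<in> H"
    and close: "\<And>x. \<bar>zero_ext f x - zero_ext g x\<bar> \<le> \<eta>"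
    and in_X: "\<And>i. i < n \<Longrightarrow> fst (\<omega> i) \<in> X"
    and erm: "emp_risk \<sigma> n \<omega> f \<le> emp_risk \<sigma> n \<omega> fstar"
    and typical: "(\<Sum>i<n. expectation (excess_loss \<sigma> g) - excess_loss \<sigma> g (\<omega> i)) < W"
  shows "sq_dist g \<le> 2 * \<sigma> * \<eta> + bias_const * \<sigma> powr (- \<epsilon>) + W / n"
    and "sq_dist f \<le> 4 * \<sigma> * \<eta> + bias_const * \<sigma> powr (- \<epsilon>) + W / n"
proof -
  have "0 < \<sigma>" using \<sigma> sup_bound_nonneg by linarith
  have shift: "excess_loss \<sigma> h z \<le> excess_loss \<sigma> h' z + 2 * \<sigma> * \<eta>"
    if "h \<in> {f, g}" "h' \<in> {f, g}" for h h' z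
  proof -
    have "\<bar>zero_ext h (fst z) - zero_ext h' (fst z)\<bar> \<le> \<eta>"
      using that close[of "fst z"] by (auto simp: abs_minus_commute)
    then show ?thesis
      using that f g \<open>0 < \<sigma>\<close> excess_loss_le_shift[of h h' \<sigma> z]
      by (smt (verit, best) insert_iff mult_left_mono singletonD)
  qed
  have "(\<Sum>i<n. excess_loss \<sigma> f (\<omega> i)) = n * (emp_risk \<sigma> n \<omega> f - emp_risk \<sigma> n \<omega> fstar)"
    using \<open>0 < n\<close> in_X
    by (simp add: excess_loss_def emp_risk_def zero_ext_def sum_subtractf right_diff_distrib)
  also have "\<dots> \<le> 0" using erm by (simp add: mult_nonneg_nonpos)
  finally have "(\<Sum>i<n. excess_loss \<sigma> g (\<omega> i)) \<le> n * (2 * \<sigma> * \<eta>)"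
    using sum_mono[of "{..<n}" "\<lambda>i. excess_loss \<sigma> g (\<omega> i)" "\<lambda>i. excess_loss \<sigma> f (\<omega> i) + 2 * \<sigma> * \<eta>"]
      shift[of g f] by (simp add: sum.distrib)
  then have mean_g: "expectation (excess_loss \<sigma> g) < 2 * \<sigma> * \<eta> + W / n"
    using typical \<open>0 < n\<close> by (simp add: sum_subtractf field_simps)
  moreover have "expectation (excess_loss \<sigma> f) \<le> expectation (\<lambda>z. excess_loss \<sigma> g z + 2 * \<sigma> * \<eta>)"
    using integrable_excess_loss[OF f \<open>0 < \<sigma>\<close>] integrable_excess_loss[OF g \<open>0 < \<sigma>\<close>] shift[of f g]
    by (intro integral_mono) auto
  moreover have "expectation (\<lambda>z. excess_loss \<sigma> g z + 2 * \<sigma> * \<eta>) = expectation (excess_loss \<sigma> g) + 2 * \<sigma> * \<eta>"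
    using integrable_excess_loss[OF g \<open>0 < \<sigma>\<close>] by (simp add: prob_space)
  ultimately show "sq_dist g \<le> 2 * \<sigma> * \<eta> + bias_const * \<sigma> powr (- \<epsilon>) + W / n"
    and "sq_dist f \<le> 4 * \<sigma> * \<eta> + bias_const * \<sigma> powr (- \<epsilon>) + W / n"
    using expectation_excess_loss[OF g \<sigma>] expectation_excess_loss[OF f \<sigma>] by linarith+
qed

definition oracle_bound :: "nat \<Rightarrow> real \<Rightarrow> real \<Rightarrow> real \<Rightarrow> real \<Rightarrow> real" where
  "oracle_bound n \<sigma> \<eta> \<tau> L = 6 * \<sigma> * \<eta> + 2 * bias_const * \<sigma> powr (- \<epsilon>) + 32 * (sup_bound + 1) * \<sigma> * L / n
    + 16 * \<tau>\<^sup>2 * L / n + 16 * sup_bound * sqrt (shifted_moment * truncation_scale \<epsilon> \<sigma> \<tau> * L / n)"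

text \<open>The variance of the excess loss of \<open>g\<close> is itself bounded by \<open>sq_dist g\<close>, so the Bernstein
  deviation can be absorbed into the left-hand side.\<close>

lemma erm_sq_dist_le_oracle_bound:
  fixes n :: nat
  assumes "0 < n" and \<sigma>: "2 * sup_bound < \<sigma>" and "0 < \<tau>" "0 < L" and f: "f \<in> H" and g: "g \<in> H"
    and close: "\<And>x. \<bar>zero_ext f x - zero_ext g x\<bar> \<le> \<eta>"
    and in_X: "\<And>i. i < n \<Longrightarrow> fst (\<omega> i) \<in> X"
    and erm: "emp_risk \<sigma> n \<omega> f \<le> emp_risk \<sigma> n \<omega> fstar"
    and typical: "\<omega> \<in> space (sample_space n)" "\<omega> \<notin> deviation_event n \<sigma> L g"
  shows "sq_dist f \<le> oracle_bound n \<sigma> \<eta> \<tau> L"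
proof -
  have "0 < \<sigma>" using \<sigma> sup_bound_nonneg by linarith
  define v where "v = expectation (\<lambda>z. (excess_loss \<sigma> g z)\<^sup>2)"
  define b where "b = 8 * (sup_bound + 1) * \<sigma>"
  define u where "u = L / n"
  define V where "V = 16 * sup_bound\<^sup>2 * shifted_moment * truncation_scale \<epsilon> \<sigma> \<tau>"
  define K where "K = bias_const * \<sigma> powr (- \<epsilon>)"
  define Q where "Q = sqrt (shifted_moment * truncation_scale \<epsilon> \<sigma> \<tau> * L / n)"
  have "(\<Sum>i<n. expectation (excess_loss \<sigma> g) - excess_loss \<sigma> g (\<omega> i)) < 2 * sqrt (n * v * L) + 2 * b * L"
    using typical by (auto simp: deviation_event_def v_def b_def)
  moreover have "(2 * sqrt (n * v * L) + 2 * b * L) / n = 2 * sqrt (v * u) + 2 * b * u"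
    using \<open>0 < n\<close> by (simp add: u_def real_sqrt_mult real_sqrt_divide field_simps)
  ultimately have D_g: "sq_dist g \<le> 2 * (\<sigma> * \<eta>) + K + 2 * sqrt (v * u) + 2 * (b * u)"
    and D_f: "sq_dist f \<le> 4 * (\<sigma> * \<eta>) + K + 2 * sqrt (v * u) + 2 * (b * u)"
    using erm_sq_dist_le[OF \<open>0 < n\<close> \<sigma> f g close in_X erm] by (fastforce simp: K_def mult.assoc)+
  have "0 \<le> shifted_moment * truncation_scale \<epsilon> \<sigma> \<tau> * L / n"
    using \<open>0 < L\<close> shifted_moment_nonneg truncation_scale_nonneg by simp
  then have "V * u = (4 * sup_bound * Q)\<^sup>2" "0 \<le> Q"
    by (simp_all add: V_def u_def Q_def power_mult_distrib)
  then have "sqrt (V * u) = 4 * (sup_bound * Q)"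
    using sup_bound_nonneg by simp
  moreover have "v \<le> 4 * \<tau>\<^sup>2 * sq_dist g + V"
    using second_moment_excess_loss[OF g \<open>0 < \<sigma>\<close> \<open>0 < \<tau>\<close>] by (simp add: v_def V_def)
  then have "2 * sqrt (v * u) \<le> sq_dist g / 2 + 8 * \<tau>\<^sup>2 * u + 2 * sqrt (V * u)"
    using \<open>0 < L\<close> sup_bound_nonneg shifted_moment_nonneg truncation_scale_nonneg
    by (intro sqrt_variance_absorb sq_dist_nonneg) (auto simp: u_def V_def)
  ultimately have "2 * sqrt (v * u) \<le> sq_dist g / 2 + 8 * (\<tau>\<^sup>2 * u) + 8 * (sup_bound * Q)"
    by simp
  with D_g D_f have "sq_dist f \<le> 6 * (\<sigma> * \<eta>) + 2 * K + 4 * (b * u) + 16 * (\<tau>\<^sup>2 * u) + 16 * (sup_bound * Q)"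
    by linarith
  then show ?thesis
    by (simp add: oracle_bound_def K_def b_def u_def Q_def algebra_simps add_divide_distrib)
qed

theorem oracle_inequality:
  fixes n :: nat
  assumes "0 < n" and \<sigma>: "2 * sup_bound < \<sigma>" and "0 < \<eta>" "0 < \<tau>" "0 < L"
    and F: "finite F" "F \<subseteq> H" and cover: "\<And>f. f \<in> H \<Longrightarrow> \<exists>g\<in>F. sup_norm_on X (\<lambda>x. f x - g x) < \<eta>"
  obtains A where "A \<in> sets (sample_space n)"
    and "1 - card F * exp (- L) \<le> measure (sample_space n) A"
    and "\<And>\<omega> f. \<omega> \<in> A \<Longrightarrow> f \<in> H \<Longrightarrow> emp_risk \<sigma> n \<omega> f \<le> emp_risk \<sigma> n \<omega> fstar \<Longrightarrow>
      sq_dist f \<le> oracle_bound n \<sigma> \<eta> \<tau> L"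
proof -
  have "0 < \<sigma>" using \<sigma> sup_bound_nonneg by linarith
  obtain A where A: "A \<in> sets (sample_space n)" "1 - card F * exp (- L) \<le> measure (sample_space n) A"
    and in_X: "\<And>\<omega> i. \<omega> \<in> A \<Longrightarrow> i < n \<Longrightarrow> fst (\<omega> i) \<in> X"
    and typical: "\<And>\<omega> g. \<omega> \<in> A \<Longrightarrow> g \<in> F \<Longrightarrow> \<omega> \<notin> deviation_event n \<sigma> L g"
    using good_sample_event[OF F \<open>0 < \<sigma>\<close> \<open>0 < L\<close>] by blast
  show thesis
  proof (rule that[OF A])
    fix \<omega> f assume "\<omega> \<in> A" "f \<in> H" and erm: "emp_risk \<sigma> n \<omega> f \<le> emp_risk \<sigma> n \<omega> fstar"
    obtain g where "g \<in> F" and g_close: "sup_norm_on X (\<lambda>x. f x - g x) < \<eta>"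
      using cover[OF \<open>f \<in> H\<close>] by blast
    with F have "g \<in> H" by auto
    have "\<bar>zero_ext f x - zero_ext g x\<bar> \<le> \<eta>" for x
      using abs_zero_ext_diff_le_sup_norm[OF \<open>f \<in> H\<close> \<open>g \<in> H\<close>, of x] g_close by linarith
    moreover have "\<omega> \<in> space (sample_space n)" using A(1) \<open>\<omega> \<in> A\<close> sets.sets_into_space by blast
    ultimately show "sq_dist f \<le> oracle_bound n \<sigma> \<eta> \<tau> L"
      using erm_sq_dist_le_oracle_bound[OF \<open>0 < n\<close> \<sigma> \<open>0 < \<tau>\<close> \<open>0 < L\<close> \<open>f \<in> H\<close> \<open>g \<in> H\<close> _
          in_X[OF \<open>\<omega> \<in> A\<close>] erm _ typical[OF \<open>\<omega> \<in> A\<close> \<open>g \<in> F\<close>]]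
      by blast
  qed
qed

section \<open>Convergence rate\<close>

lemma oracle_bound_le_rate:
  fixes n :: nat
  assumes "0 < n" "0 < \<sigma>" "0 \<le> r" "0 < L" "L \<le> T * S" "0 \<le> T"
    and "\<sigma> * \<eta> = r" "\<sigma> powr (- \<epsilon>) = r" "\<sigma> * S / n \<le> r" "\<tau>\<^sup>2 * S / n \<le> r"
    and "truncation_scale \<epsilon> \<sigma> \<tau> * S / n \<le> r\<^sup>2"
  shows "oracle_bound n \<sigma> \<eta> \<tau> L
    \<le> (6 + 2 * bias_const + 8 * sup_bound * shifted_moment + (40 * sup_bound + 48) * T) * r"
proof -
  let ?\<Lambda> = "truncation_scale \<epsilon> \<sigma> \<tau>"
  have scale: "a * L / n \<le> T * b" if "a * S / n \<le> b" "0 \<le> a" for a b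
  proof -
    have "a * L / n \<le> a * (T * S) / n"
      using assms that by (intro divide_right_mono mult_left_mono) auto
    also have "\<dots> \<le> T * b"
      using mult_left_mono[OF that(1) \<open>0 \<le> T\<close>] by (simp add: mult_ac)
    finally show ?thesis .
  qed
  have "\<sigma> * L / n \<le> T * r" "\<tau>\<^sup>2 * L / n \<le> T * r"
    using scale assms by auto
  moreover have "sqrt (shifted_moment * ?\<Lambda> * L / n) \<le> (shifted_moment + T) / 2 * r"
  proof -
    have "shifted_moment * (?\<Lambda> * L / n) \<le> shifted_moment * (T * r\<^sup>2)"
      using scale[of ?\<Lambda> "r\<^sup>2"] assms shifted_moment_nonneg truncation_scale_nonneg
      by (intro mult_left_mono) auto
    then have "sqrt (shifted_moment * ?\<Lambda> * L / n) \<le> sqrt (shifted_moment * T * r\<^sup>2)"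
      by (intro real_sqrt_le_mono) (simp add: mult.assoc)
    also have "\<dots> = sqrt (shifted_moment * T) * r"
      using \<open>0 \<le> r\<close> by (simp add: real_sqrt_mult)
    also have "\<dots> \<le> (shifted_moment + T) / 2 * r"
      using arith_geo_mean_sqrt[OF shifted_moment_nonneg \<open>0 \<le> T\<close>] \<open>0 \<le> r\<close>
      by (intro mult_right_mono) auto
    finally show ?thesis .
  qed
  ultimately have "6 * (\<sigma> * \<eta>) + 2 * bias_const * \<sigma> powr (- \<epsilon>) + 32 * (sup_bound + 1) * (\<sigma> * L / n)
      + 16 * (\<tau>\<^sup>2 * L / n) + 16 * sup_bound * sqrt (shifted_moment * ?\<Lambda> * L / n)
    \<le> 6 * r + 2 * bias_const * r + 32 * (sup_bound + 1) * (T * r) + 16 * (T * r)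
      + 16 * sup_bound * ((shifted_moment + T) / 2 * r)"
    using assms sup_bound_nonneg bias_const_nonneg by (intro add_mono mult_left_mono) auto
  then show ?thesis
    by (simp add: oracle_bound_def algebra_simps add_divide_distrib)
qed

lemma entropy_bounded_cover:
  assumes "compact_in_CX X H" and entropy: "ln (real (covering_number X H \<eta>)) \<le> c * \<eta> powr (- q)"
    and "0 < \<eta>"
  obtains F where "finite F" "F \<subseteq> H" "1 \<le> real (card F)" "ln (card F) \<le> c * \<eta> powr (- q)"
    and "\<And>f. f \<in> H \<Longrightarrow> \<exists>g\<in>F. sup_norm_on X (\<lambda>x. f x - g x) < \<eta>"
proof -
  obtain F where F: "finite F" "card F \<le> covering_number X H \<eta>" "F \<subseteq> H"
    and cover: "\<And>f. f \<in> H \<Longrightarrow> \<exists>g\<in>F. sup_norm_on X (\<lambda>x. f x - g x) < \<eta>"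
    using covering_number_cover[OF assms(1) H_bounded X_nonempty \<open>0 < \<eta>\<close>] by blast
  have "F \<noteq> {}" using cover[OF fstar_in_H] by blast
  then have "1 \<le> real (card F)" using F(1) by (simp add: Suc_le_eq card_gt_0_iff)
  moreover have "ln (card F) \<le> ln (covering_number X H \<eta>)"
    using F(2) \<open>1 \<le> real (card F)\<close> by simp
  ultimately show thesis
    using that[OF F(1,3)] cover entropy by (meson order_trans)
qed

definition rate_const :: "real \<Rightarrow> real" where
  "rate_const c = (6 + 2 * bias_const + 8 * sup_bound * shifted_moment + (40 * sup_bound + 48) * c) / ln 2
    + (40 * sup_bound + 48)"

lemma rate_const_pos: "0 \<le> c \<Longrightarrow> 0 < rate_const c"
  using bias_const_nonneg sup_bound_nonneg shifted_moment_nonneg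
  by (simp add: rate_const_def add_nonneg_pos)

lemma rate_bound_le_rate_const:
  assumes "0 \<le> c" "ln 2 \<le> t" "0 \<le> r"
  shows "(6 + 2 * bias_const + 8 * sup_bound * shifted_moment + (40 * sup_bound + 48) * (c + t)) * r
    \<le> rate_const c * t * r"
proof -
  define a where "a = 6 + 2 * bias_const + 8 * sup_bound * shifted_moment + (40 * sup_bound + 48) * c"
  have "0 \<le> a" using bias_const_nonneg sup_bound_nonneg shifted_moment_nonneg \<open>0 \<le> c\<close>
    by (simp add: a_def)
  then have "a \<le> a / ln 2 * t" using \<open>ln 2 \<le> t\<close> by (simp add: field_simps mult_left_mono)
  then show ?thesis using \<open>0 \<le> r\<close>
    by (intro mult_right_mono) (simp_all add: rate_const_def a_def algebra_simps)
qed

theorem huber_erm_rate: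
  fixes n :: nat
  assumes H_compact: "compact_in_CX X H" and "0 < q" "0 \<le> c"
    and entropy: "\<And>\<eta>. 0 < \<eta> \<Longrightarrow> ln (real (covering_number X H \<eta>)) \<le> c * \<eta> powr (- q)"
    and "0 < \<delta>" "\<delta> < 1" and \<sigma>: "\<sigma> = real n powr Phi \<epsilon> q" "max (2 * sup_bound) 1 < \<sigma>"
  shows "\<exists>A \<in> sets (sample_space n). 1 - \<delta> \<le> measure (sample_space n) A \<and>
    (\<forall>z\<in>A. \<forall>f\<in>H. (\<forall>g\<in>H. emp_risk \<sigma> n z f \<le> emp_risk \<sigma> n z g) \<longrightarrow>
      (LINT x:X|distr \<rho> borel fst. (f x - fstar x)\<^sup>2) \<le> rate_const c * ln (2 / \<delta>) * real n powr (- (\<epsilon> * Phi \<epsilon> q)))"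
proof -
  define S where "S = \<sigma> powr (q * (1 + \<epsilon>))"
  define \<tau> where "\<tau> = \<sigma> powr (\<epsilon> / (1 + \<epsilon>))"
  define r where "r = \<sigma> powr (- \<epsilon>)"
  define \<eta> where "\<eta> = \<sigma> powr (- (1 + \<epsilon>))"
  have "1 < \<sigma>" "2 * sup_bound < \<sigma>" using \<sigma>(2) by auto
  note exponents = Phi_rate_exponents[OF \<epsilon>_pos \<open>0 < q\<close> \<sigma>(1) \<open>1 < \<sigma>\<close>, folded S_def \<tau>_def r_def \<eta>_def]
  have "0 < n" "0 < \<sigma>" "0 < \<eta>" "0 < \<tau>" "0 \<le> r"
    using exponents(1) \<open>1 < \<sigma>\<close> by (simp_all add: \<eta>_def \<tau>_def r_def)
  obtain F where F: "finite F" "F \<subseteq> H" "1 \<le> real (card F)" "ln (card F) \<le> c * \<eta> powr (- q)"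
    and cover: "\<And>f. f \<in> H \<Longrightarrow> \<exists>g\<in>F. sup_norm_on X (\<lambda>x. f x - g x) < \<eta>"
    using entropy_bounded_cover[OF H_compact entropy[OF \<open>0 < \<eta>\<close>] \<open>0 < \<eta>\<close>] by blast
  have L: "0 < ln (card F / \<delta>)" "ln (card F / \<delta>) \<le> (c + ln (2 / \<delta>)) * S"
    and "ln 2 \<le> ln (2 / \<delta>)"
    using ln_confidence_le F(3,4) exponents(2,4) \<open>0 \<le> c\<close> \<open>0 < \<delta>\<close> \<open>\<delta> < 1\<close> by blast+
  then have "0 \<le> c + ln (2 / \<delta>)" using \<open>0 \<le> c\<close> ln_ge_zero[of 2] by linarith
  obtain A where A: "A \<in> sets (sample_space n)" "1 - card F * exp (- ln (card F / \<delta>)) \<le> measure (sample_space n) A"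
    and erm_bound: "\<And>\<omega> f. \<omega> \<in> A \<Longrightarrow> f \<in> H \<Longrightarrow> emp_risk \<sigma> n \<omega> f \<le> emp_risk \<sigma> n \<omega> fstar \<Longrightarrow>
      sq_dist f \<le> oracle_bound n \<sigma> \<eta> \<tau> (ln (card F / \<delta>))"
    using oracle_inequality[OF \<open>0 < n\<close> \<open>2 * sup_bound < \<sigma>\<close> \<open>0 < \<eta>\<close> \<open>0 < \<tau>\<close> L(1) F(1,2) cover] by blast
  have "1 - \<delta> \<le> measure (sample_space n) A"
    using A(2) F(3) \<open>0 < \<delta>\<close> by (simp add: exp_minus)
  moreover have "sq_dist f \<le> rate_const c * ln (2 / \<delta>) * real n powr (- (\<epsilon> * Phi \<epsilon> q))"
    if "\<omega> \<in> A" "f \<in> H" "emp_risk \<sigma> n \<omega> f \<le> emp_risk \<sigma> n \<omega> fstar" for \<omega> f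
  proof -
    have "sq_dist f \<le> oracle_bound n \<sigma> \<eta> \<tau> (ln (card F / \<delta>))" using that by (rule erm_bound)
    also have "\<dots> \<le> (6 + 2 * bias_const + 8 * sup_bound * shifted_moment
        + (40 * sup_bound + 48) * (c + ln (2 / \<delta>))) * r"
      using exponents(3,5-7) r_def
      by (intro oracle_bound_le_rate[OF \<open>0 < n\<close> \<open>0 < \<sigma>\<close> \<open>0 \<le> r\<close> L \<open>0 \<le> c + ln (2 / \<delta>)\<close>]) auto
    also have "\<dots> \<le> rate_const c * ln (2 / \<delta>) * r"
      by (rule rate_bound_le_rate_const[OF \<open>0 \<le> c\<close> \<open>ln 2 \<le> ln (2 / \<delta>)\<close> \<open>0 \<le> r\<close>])
    finally show ?thesis using exponents(8) by simp
  qed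
  ultimately show ?thesis
    using A(1) fstar_in_H by (auto simp: sq_dist_eq_set_integral)
qed

end

theorem corollary1:
  fixes X :: "'a::euclidean_space set"
    and \<rho> :: "('a \<times> real) measure"
    and H :: "('a \<Rightarrow> real) set"
    and fstar :: "'a \<Rightarrow> real"
    and \<epsilon> q c :: real
  assumes X_compact: "compact X"
    and prob: "prob_space \<rho>"
    and sets_rho: "sets \<rho> = sets borel"
    and supp: "AE z in \<rho>. fst z \<in> X"
    and regr: "is_regression_function \<rho> X fstar"
    and fstar_bdd: "bounded (fstar ` X)"
    and H_CX: "subset_CX X H"
    and H_compact: "compact_in_CX X H"
    and H_bdd: "uniformly_bounded_on X H"
    and fstar_H: "fstar \<in> H"
    and eps_pos: "\<epsilon> > 0"
    and moment: "integrable \<rho> (\<lambda>z. \<bar>snd z\<bar> powr (1 + \<epsilon>))"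
    and q_pos: "q > 0" and c_pos: "c > 0"
    and entropy: "\<And>\<eta>. \<eta> > 0 \<Longrightarrow> ln (real (covering_number X H \<eta>)) \<le> c * \<eta> powr (- q)"
  shows "\<exists>C>0. \<forall>n::nat. \<forall>\<delta>::real. 0 < \<delta> \<longrightarrow> \<delta> < 1 \<longrightarrow>
     (let \<sigma> = real n powr Phi \<epsilon> q;
          M = max (sup_norm_on X fstar) (SUP f\<in>H. sup_norm_on X f)
      in \<sigma> > max (2 * M) 1 \<longrightarrow>
        (\<exists>A \<in> sets (PiM {..<n} (\<lambda>_. \<rho>)).
           measure (PiM {..<n} (\<lambda>_. \<rho>)) A \<ge> 1 - \<delta> \<and>
           (\<forall>z\<in>A. \<forall>f\<in>H. (\<forall>g\<in>H. emp_risk \<sigma> n z f \<le> emp_risk \<sigma> n z g) \<longrightarrow>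
              (LINT x:X|distr \<rho> borel fst. (f x - fstar x)\<^sup>2)
                \<le> C * ln (2 / \<delta>) * real n powr (- (\<epsilon> * Phi \<epsilon> q)))))"
proof -
  \<comment> \<open>\<open>fstar_bdd\<close> is implied by \<open>fstar_H\<close> and \<open>H_bdd\<close>, and compactness of \<open>X\<close> is only needed
    to make \<open>X\<close> a Borel set.\<close>
  have "X \<in> sets borel" using borel_closed compact_imp_closed[OF X_compact] by blast
  interpret huber_regression \<rho> X H fstar \<epsilon>
    by (intro huber_regression.intro huber_regression_axioms.intro)
       (fact prob sets_rho \<open>X \<in> sets borel\<close> supp regr H_CX H_bdd fstar_H eps_pos moment)+
  show ?thesis
    unfolding Let_def sup_bound_def[symmetric]
    using huber_erm_rate[OF H_compact q_pos less_imp_le[OF c_pos] entropy _ _ refl] rate_const_pos[of c] c_pos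
    by (intro exI[of _ "rate_const c"]) auto
qed

end
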